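(* Let $(\Omega,\mathcal{F},\mathbb{P})$ be a probability space, $\rho$ a random variable with $\rho>0$ a.s. and $\mathbb{E}[\rho]<\infty$, $\delta:=\mathbb{E}[\rho]$, $A$ a random variable, and $C$ a bivariate copula. Assume the conditional distribution of $\rho$ given $A$ is continuous and the distribution of $A$ is continuous. Let $\alpha\in(0,1)$, $x>0$, and $V(X):=F_X^{-1}(\alpha)$ (the $\alpha$-quantile given by the right-continuous quantile function; equivalently $m$ is the point mass at $\alpha$). Define $Z:=C_{1|2}^{-1}\big(1-F_{\rho|A}(\rho,A),F_A(A)\big)$, $\varphi(z):=\mathbb{E}[\rho\mid Z=z]$ for $z\in(0,1)$, $\tilde\zeta(c):=m([c,1])/\int_c^1\varphi(z)\,dz=\mathbf{1}_{\{c\le\alpha\}}/\int_c^1\varphi(z)\,dz$ for $c\in(0,1)$, and $\tilde\gamma^*:=\sup_{c\in(0,1)}\tilde\zeta(c)$. Then $\tilde\gamma^*=\tilde\zeta(\alpha)>1/\delta$, and $X^*:=k^*\mathbf{1}_{\{Z\ge\alpha\}}$ with $k^*:=x/\mathbb{E}[\rho\mathbf{1}_{\{Z\ge\alpha\}}]$ is optimal for the problem of maximizing $V(X)$ subject to $\mathbb{E}[\rho X]\le x$, $X\ge0$, and $\mathbb{P}(X\le y,A\le a)=C(F_X(y),F_A(a))$ for all $y,a\in\mathbb{R}$.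
   Context: For random variables $Y_1,Y_2$, $F_{Y_1|Y_2}(\cdot,y_2)$ is the conditional CDF of $Y_1$ given $Y_2=y_2$; $F_A$ is the CDF of $A$. $C_{1|2}^{-1}(\cdot,v)$ is the right-continuous conditional quantile function of the first component of a random vector with distribution $C$ given that the second component equals $v$. $F_X^{-1}$ is the right-continuous quantile function of $X$. *)

theory Defs
  imports "HOL-Probability.Probability"
begin

definition cdf_rv :: "'a measure \<Rightarrow> ('a \<Rightarrow> real) \<Rightarrow> real \<Rightarrow> real" where
  "cdf_rv M X y = measure M {w \<in> space M. X w \<le> y}"

definition rquantile :: "(real \<Rightarrow> real) \<Rightarrow> real \<Rightarrow> real" where
  "rquantile F t = Inf {y. F y > t}"

definition copula :: "(real \<Rightarrow> real \<Rightarrow> real) \<Rightarrow> bool" where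
  "copula C \<longleftrightarrow>
     (\<forall>u\<in>{0..1}. C u 0 = 0 \<and> C 0 u = 0 \<and> C u 1 = u \<and> C 1 u = u) \<and>
     (\<forall>u1\<in>{0..1}. \<forall>u2\<in>{0..1}. \<forall>v1\<in>{0..1}. \<forall>v2\<in>{0..1}.
        u1 \<le> u2 \<longrightarrow> v1 \<le> v2 \<longrightarrow> C u2 v2 - C u2 v1 - C u1 v2 + C u1 v1 \<ge> 0)"

text \<open>F is a (regular) conditional CDF of Y given X under M:
  F y x = P(Y \<le> y | X = x).\<close>
definition is_cond_cdf ::
  "'a measure \<Rightarrow> ('a \<Rightarrow> real) \<Rightarrow> ('a \<Rightarrow> real) \<Rightarrow> (real \<Rightarrow> real \<Rightarrow> real) \<Rightarrow> bool" where
  "is_cond_cdf M Y X F \<longleftrightarrow>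
     (\<forall>x. mono (\<lambda>y. F y x)) \<and>
     (\<forall>x y. continuous (at_right y) (\<lambda>y. F y x)) \<and>
     (\<forall>x. ((\<lambda>y. F y x) \<longlongrightarrow> 0) at_bot) \<and>
     (\<forall>x. ((\<lambda>y. F y x) \<longlongrightarrow> 1) at_top) \<and>
     (\<forall>y. (\<lambda>x. F y x) \<in> borel_measurable borel) \<and>
     (\<forall>y a. measure M {w \<in> space M. Y w \<le> y \<and> X w \<le> a}
              = (\<integral>w. indicator {..a} (X w) * F y (X w) \<partial>M))"

text \<open>C12 u v is a (regular) conditional CDF of the first component given
  that the second component equals v, for a random vector (U,V) with distribution
  function C (V is uniform on [0,1] since C is a copula).\<close>
definition is_copula_cond_cdf ::
  "(real \<Rightarrow> real \<Rightarrow> real) \<Rightarrow> (real \<Rightarrow> real \<Rightarrow> real) \<Rightarrow> bool" where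
  "is_copula_cond_cdf C C12 \<longleftrightarrow>
     (\<forall>v\<in>{0..1}. mono (\<lambda>u. C12 u v)) \<and>
     (\<forall>v\<in>{0..1}. \<forall>u. continuous (at_right u) (\<lambda>u. C12 u v)) \<and>
     (\<forall>v\<in>{0..1}. \<forall>u. u < 0 \<longrightarrow> C12 u v = 0) \<and>
     (\<forall>v\<in>{0..1}. \<forall>u. 1 \<le> u \<longrightarrow> C12 u v = 1) \<and>
     (\<forall>u. (\<lambda>v. C12 u v) \<in> borel_measurable borel) \<and>
     (\<forall>u\<in>{0..1}. \<forall>v\<in>{0..1}. C u v = (LBINT t:{0..v}. C12 u t))"

definition cond_quantile :: "(real \<Rightarrow> real \<Rightarrow> real) \<Rightarrow> real \<Rightarrow> real \<Rightarrow> real" where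
  "cond_quantile C12 t v = rquantile (\<lambda>u. C12 u v) t"

definition feasible ::
  "'a measure \<Rightarrow> ('a \<Rightarrow> real) \<Rightarrow> ('a \<Rightarrow> real) \<Rightarrow> (real \<Rightarrow> real \<Rightarrow> real) \<Rightarrow> real
     \<Rightarrow> ('a \<Rightarrow> real) \<Rightarrow> bool" where
  "feasible M \<rho> A C x X \<longleftrightarrow>
     X \<in> borel_measurable M \<and>
     (AE w in M. 0 \<le> X w) \<and>
     (\<integral>\<^sup>+ w. ennreal (\<rho> w * X w) \<partial>M) \<le> ennreal x \<and>
     (\<forall>y a. measure M {w \<in> space M. X w \<le> y \<and> A w \<le> a}
              = C (cdf_rv M X y) (cdf_rv M A a))"

end

theory Submission
  imports Defs
begin

(*
  Write UA = F_A(A) and Urho = F_{rho|A}(rho, A). Both are uniform and Urho is independent of A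
  (given A, it is the probability integral transform of rho), so Z = C_{1|2}^{-1}(1 - Urho, UA) is
  uniform and (Z, A) has copula C; this makes Xstar feasible with V(Xstar) = kstar.

  Conversely, the copula constraint fixes the joint law of (X, A) to be that of (Z', A) for some Z'
  with (Z', A) ~ C, so F_X(y) <= alpha implies P(alpha <= Z, A in B) <= P(y < X, A in B) for every
  Borel B. Since Z is decreasing in rho for fixed A, the event {alpha <= Z} is a Neyman-Pearson
  region {rho <= r(A)}, whence E[rho 1{alpha <= Z}] <= E[rho 1{y < X}]. Markov's inequality turns
  the budget E[rho X] <= x into y E[rho 1{y < X}] <= x, so y <= x / E[rho 1{alpha <= Z}] = kstar.
  The claims on zeta follow from the strict monotonicity of c |-> int_c^1 phi = E[rho 1{c <= Z}].
*)

lemma cdf_rv_eq_cdf: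
  assumes "X \<in> borel_measurable M"
  shows "cdf_rv M X = cdf (distr M borel X)"
  unfolding cdf_rv_def cdf_def using assms
  by (auto simp: measure_distr intro!: ext arg_cong[where f="measure M"])

lemma mono_tendsto_at_bot_le:
  fixes F :: "real \<Rightarrow> real"
  assumes "mono F" "(F \<longlongrightarrow> l) at_bot"
  shows "l \<le> F y"
proof (rule tendsto_le[OF _ tendsto_const assms(2)])
  show "\<forall>\<^sub>F x in at_bot. F x \<le> F y"
    using assms(1) by (auto simp: eventually_at_bot_linorder mono_def intro!: exI[of _ y])
qed simp

lemma mono_tendsto_at_top_ge:
  fixes F :: "real \<Rightarrow> real"
  assumes "mono F" "(F \<longlongrightarrow> l) at_top"
  shows "F y \<le> l"
proof (rule tendsto_le[OF _ assms(2) tendsto_const])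
  show "\<forall>\<^sub>F x in at_top. F y \<le> F x"
    using assms(1) by (auto simp: eventually_at_top_linorder mono_def intro!: exI[of _ y])
qed simp

lemma continuous_cdf_level_set:
  fixes F :: "real \<Rightarrow> real"
  assumes cont: "continuous_on UNIV F" and mono: "mono F"
    and bot: "(F \<longlongrightarrow> 0) at_bot" and top: "(F \<longlongrightarrow> 1) at_top"
    and t: "0 < t" "t < 1"
  shows "F (Sup {r. F r \<le> t}) = t" and "F r \<le> t \<longleftrightarrow> r \<le> Sup {r. F r \<le> t}"
proof -
  define S where "S = {r. F r \<le> t}"
  obtain r0 where r0: "\<And>r. r \<le> r0 \<Longrightarrow> F r < t"
    using order_tendstoD(2)[OF bot t(1)] by (auto simp: eventually_at_bot_linorder)
  obtain r1 where r1: "\<And>r. r1 \<le> r \<Longrightarrow> t < F r"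
    using order_tendstoD(1)[OF top t(2)] by (auto simp: eventually_at_top_linorder)
  have "r0 \<in> S"
    using r0[of r0] by (simp add: S_def)
  moreover have bdd: "bdd_above S"
    unfolding bdd_above_def S_def using r1 by (auto intro!: exI[of _ r1] simp: not_less[symmetric])
  moreover have "closed S"
    unfolding S_def by (intro closed_Collect_le cont continuous_on_const)
  ultimately have Sup_in: "Sup S \<in> S"
    by (intro closed_contains_Sup) auto
  have level: "F r \<le> t \<longleftrightarrow> r \<le> Sup S" for r
  proof
    assume "F r \<le> t"
    then show "r \<le> Sup S"
      using bdd by (auto intro: cSup_upper simp: S_def)
  next
    assume "r \<le> Sup S"
    then show "F r \<le> t"
      using Sup_in mono by (auto simp: S_def mono_def intro: order_trans)
  qed
  have "\<exists>r\<ge>r0. r \<le> max r0 r1 \<and> F r = t"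
    by (rule IVT') (use r0[of r0] r1[of "max r0 r1"] in \<open>auto intro: continuous_on_subset[OF cont]\<close>)
  then obtain r' where "F r' = t"
    by blast
  then have "t \<le> F (Sup S)"
    using level[of r'] mono by (auto simp: mono_def)
  then have "F (Sup S) = t"
    using Sup_in by (simp add: S_def)
  with level show "F (Sup {r. F r \<le> t}) = t" "F r \<le> t \<longleftrightarrow> r \<le> Sup {r. F r \<le> t}"
    unfolding S_def by blast+
qed

context prob_space
begin

lemma
  assumes "X \<in> borel_measurable M"
  shows mono_cdf_rv: "mono (cdf_rv M X)"
    and cdf_rv_nonneg: "0 \<le> cdf_rv M X y"
    and cdf_rv_le_1: "cdf_rv M X y \<le> 1"
    and cdf_rv_at_bot: "(cdf_rv M X \<longlongrightarrow> 0) at_bot"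
    and cdf_rv_at_top: "(cdf_rv M X \<longlongrightarrow> 1) at_top"
proof -
  interpret D: real_distribution "distr M borel X"
    using assms by simp
  show "mono (cdf_rv M X)"
    unfolding cdf_rv_eq_cdf[OF assms] by (intro monoI D.cdf_nondecreasing)
  show "0 \<le> cdf_rv M X y" "cdf_rv M X y \<le> 1"
    "(cdf_rv M X \<longlongrightarrow> 0) at_bot" "(cdf_rv M X \<longlongrightarrow> 1) at_top"
    unfolding cdf_rv_eq_cdf[OF assms]
    by (rule D.cdf_nonneg D.cdf_bounded_prob D.cdf_lim_at_bot D.cdf_lim_at_top_prob)+
qed

lemma prob_cdf_rv_comp_le:
  assumes Y[measurable]: "Y \<in> borel_measurable M" and cont: "continuous_on UNIV (cdf_rv M Y)"
    and t: "0 \<le> t" "t \<le> 1"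
  shows "measure M {w \<in> space M. cdf_rv M Y (Y w) \<le> t} = t"
proof -
  let ?F = "cdf_rv M Y"
  have [measurable]: "?F \<in> borel_measurable borel"
    by (rule borel_measurable_mono[OF mono_cdf_rv[OF Y]])
  have interior: "measure M {w \<in> space M. ?F (Y w) \<le> s} = s" if s: "0 < s" "s < 1" for s
  proof -
    note level = continuous_cdf_level_set[OF cont mono_cdf_rv[OF Y] cdf_rv_at_bot[OF Y] cdf_rv_at_top[OF Y] s]
    have "{w \<in> space M. ?F (Y w) \<le> s} = {w \<in> space M. Y w \<le> Sup {r. ?F r \<le> s}}"
      using level(2) by blast
    then show ?thesis
      using level(1) by (simp add: cdf_rv_def)
  qed
  consider "t = 0" | "0 < t" "t < 1" | "t = 1"
    using t by linarith
  then show ?thesis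
  proof cases
    case 1
    have small: "measure M {w \<in> space M. ?F (Y w) \<le> 0} \<le> 0 + e" if "0 < e" for e
    proof -
      have "measure M {w \<in> space M. ?F (Y w) \<le> 0} \<le> measure M {w \<in> space M. ?F (Y w) \<le> min e (1/2)}"
        using that by (intro finite_measure_mono) auto
      also have "\<dots> = min e (1/2)"
        using that by (intro interior) auto
      finally show ?thesis
        by simp
    qed
    have "measure M {w \<in> space M. ?F (Y w) \<le> 0} \<le> 0"
      by (rule field_le_epsilon) (rule small)
    then show ?thesis
      using 1 by (simp add: antisym)
  next
    case 3
    then have "{w \<in> space M. ?F (Y w) \<le> t} = space M"
      using cdf_rv_le_1[OF Y] by auto
    then show ?thesis
      using 3 by (simp add: prob_space)
  qed (simp add: interior)
qed

lemma integral_comp_uniform: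
  fixes g :: "real \<Rightarrow> real"
  assumes [measurable]: "Y \<in> borel_measurable M" "g \<in> borel_measurable borel"
    and uniform: "\<And>t. 0 \<le> t \<Longrightarrow> t \<le> 1 \<Longrightarrow> measure M {w \<in> space M. Y w \<le> t} = t"
  shows "(\<integral>w. g (Y w) \<partial>M) = (\<integral>t. indicator {0..1} t * g t \<partial>lborel)"
proof -
  have "distributed M lborel Y (\<lambda>t. indicator {0..1} t / measure lborel {0..1::real})"
    by (rule uniform_distrI_borel_atLeastAtMost) (simp_all add: uniform)
  from distributed_integral[OF this, of g] show ?thesis
    by simp
qed

lemma prob_le_of_prob_less:
  assumes [measurable]: "Y \<in> borel_measurable M"
    and less: "\<And>t. 0 \<le> t \<Longrightarrow> t \<le> 1 \<Longrightarrow> measure M {w \<in> space M. Y w < t} = t"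
    and t: "0 \<le> t" "t \<le> 1"
  shows "measure M {w \<in> space M. Y w \<le> t} = t"
proof (rule antisym)
  have "measure M {w \<in> space M. Y w < t} \<le> measure M {w \<in> space M. Y w \<le> t}"
    by (intro finite_measure_mono) auto
  then show "t \<le> measure M {w \<in> space M. Y w \<le> t}"
    using less[OF t] by simp
  show "measure M {w \<in> space M. Y w \<le> t} \<le> t"
  proof (cases "t = 1")
    case False
    have "measure M {w \<in> space M. Y w \<le> t} \<le> t + e" if "0 < e" for e
    proof -
      have u: "t < min 1 (t + e)" "0 \<le> min 1 (t + e)" "min 1 (t + e) \<le> 1"
        using False t that by auto
      have "measure M {w \<in> space M. Y w \<le> t} \<le> measure M {w \<in> space M. Y w < min 1 (t + e)}"
        using u(1) by (intro finite_measure_mono) auto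
      also have "\<dots> = min 1 (t + e)"
        using u(2,3) by (rule less)
      finally show ?thesis
        by simp
    qed
    then show ?thesis
      by (rule field_le_epsilon)
  qed simp
qed

lemma AE_unit_interval_of_prob_less:
  assumes [measurable]: "Y \<in> borel_measurable M"
    and less: "\<And>t. 0 \<le> t \<Longrightarrow> t \<le> 1 \<Longrightarrow> measure M {w \<in> space M. Y w < t} = t"
  shows "AE w in M. 0 \<le> Y w \<and> Y w \<le> 1"
proof -
  have "{w \<in> space M. 0 \<le> Y w \<and> Y w \<le> 1} = {w \<in> space M. Y w \<le> 1} - {w \<in> space M. Y w < 0}"
    by auto
  also have "prob \<dots> = prob {w \<in> space M. Y w \<le> 1} - prob {w \<in> space M. Y w < 0}"
    by (rule finite_measure_Diff) auto
  finally have "prob {w \<in> space M. 0 \<le> Y w \<and> Y w \<le> 1} = 1"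
    using prob_le_of_prob_less[OF _ less, of 1] less[of 0] by simp
  from AE_prob_1[OF this] show ?thesis
    by eventually_elim auto
qed

lemma nn_integral_eq_integral_bounded:
  assumes [measurable]: "f \<in> borel_measurable M" and "\<And>w. w \<in> space M \<Longrightarrow> 0 \<le> f w \<and> f w \<le> c"
  shows "(\<integral>\<^sup>+w. ennreal (f w) \<partial>M) = ennreal (\<integral>w. f w \<partial>M)"
  using assms by (intro nn_integral_eq_integral integrable_const_bound[where B=c]) auto

lemma measure_le_tendsto_of_above:
  fixes f h :: "'a \<Rightarrow> real" and g :: "nat \<Rightarrow> 'a \<Rightarrow> real"
  assumes [measurable]: "f \<in> borel_measurable M" "\<And>k. g k \<in> borel_measurable M" "h \<in> borel_measurable M"
    "{w \<in> space M. P w} \<in> sets M" and above: "\<And>k w. h w \<le> g k w" and lim: "\<And>w. (\<lambda>k. g k w) \<longlonglongrightarrow> h w"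
  shows "(\<lambda>k. measure M {w \<in> space M. f w \<le> g k w \<and> P w}) \<longlonglongrightarrow> measure M {w \<in> space M. f w \<le> h w \<and> P w}"
proof -
  define S where "S k = {w \<in> space M. f w \<le> g k w \<and> P w}" for k
  define S_lim where "S_lim = {w \<in> space M. f w \<le> h w \<and> P w}"
  have "{w \<in> space M. f w \<le> g k w} \<in> sets M" for k
    using assms(1) assms(2)[of k] by (rule borel_measurable_le)
  moreover have "{w \<in> space M. f w \<le> h w} \<in> sets M"
    using assms(1,3) by (rule borel_measurable_le)
  ultimately have "{w \<in> space M. f w \<le> g k w} \<inter> {w \<in> space M. P w} \<in> sets M"
    "{w \<in> space M. f w \<le> h w} \<inter> {w \<in> space M. P w} \<in> sets M" for k
    using assms(4) by auto
  moreover have "S k = {w \<in> space M. f w \<le> g k w} \<inter> {w \<in> space M. P w}"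
    "S_lim = {w \<in> space M. f w \<le> h w} \<inter> {w \<in> space M. P w}" for k
    by (auto simp: S_def S_lim_def)
  ultimately have [measurable]: "S k \<in> sets M" "S_lim \<in> sets M" for k
    by simp_all
  have "(\<lambda>k. \<integral>w. (indicator (S k) w :: real) \<partial>M) \<longlonglongrightarrow> (\<integral>w. indicator S_lim w \<partial>M)"
  proof (rule integral_dominated_convergence[where w="\<lambda>_. 1"])
    show "AE w in M. (\<lambda>k. indicator (S k) w :: real) \<longlonglongrightarrow> indicator S_lim w"
    proof (rule AE_I2)
      fix w
      show "(\<lambda>k. indicator (S k) w :: real) \<longlonglongrightarrow> indicator S_lim w"
      proof (cases "f w \<le> h w")
        case True
        then have "indicator (S k) w = (indicator S_lim w :: real)" for k
          using above[of w k] by (auto simp: S_def S_lim_def split: split_indicator)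
        then show ?thesis
          by simp
      next
        case False
        then have "\<forall>\<^sub>F k in sequentially. g k w < f w"
          using order_tendstoD(2)[OF lim[of w]] by simp
        then show ?thesis
          using False by (auto intro: tendsto_eventually elim!: eventually_mono simp: S_def S_lim_def indicator_def)
      qed
    qed
  qed (auto split: split_indicator)
  then show ?thesis
    by (simp add: S_def S_lim_def)
qed

end

lemma emeasure_distr_density_comp:
  assumes [measurable]: "h \<in> borel_measurable M" "A \<in> measurable M N" "B \<in> sets N"
  shows "emeasure (distr (density M h) N A) B = (\<integral>\<^sup>+w. h w * indicator B (A w) \<partial>M)"
proof -
  have "emeasure (distr (density M h) N A) B = emeasure (density M h) (A -` B \<inter> space M)"
    by (simp add: emeasure_distr)
  also have "\<dots> = (\<integral>\<^sup>+w. h w * indicator (A -` B \<inter> space M) w \<partial>M)"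
    by (rule emeasure_density) auto
  also have "\<dots> = (\<integral>\<^sup>+w. h w * indicator B (A w) \<partial>M)"
    by (rule nn_integral_cong) (auto split: split_indicator)
  finally show ?thesis .
qed

lemma nn_integral_comp_eq_of_atMost:
  fixes A :: "'a \<Rightarrow> real"
  assumes [measurable]: "A \<in> borel_measurable M" "h1 \<in> borel_measurable M" "h2 \<in> borel_measurable M"
    and finite: "(\<integral>\<^sup>+w. h1 w \<partial>M) < \<infinity>" "(\<integral>\<^sup>+w. h2 w \<partial>M) < \<infinity>"
    and eq: "\<And>a. (\<integral>\<^sup>+w. h1 w * indicator {..a} (A w) \<partial>M) = (\<integral>\<^sup>+w. h2 w * indicator {..a} (A w) \<partial>M)"
    and [measurable]: "B \<in> sets borel"
  shows "(\<integral>\<^sup>+w. h1 w * indicator B (A w) \<partial>M) = (\<integral>\<^sup>+w. h2 w * indicator B (A w) \<partial>M)"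
proof -
  have finite_borel: "finite_borel_measure (distr (density M h) borel A)"
    if [measurable]: "h \<in> borel_measurable M" and "(\<integral>\<^sup>+w. h w \<partial>M) < \<infinity>" for h
    unfolding finite_borel_measure_def finite_borel_measure_axioms_def
    using that emeasure_distr_density_comp[of h M A borel UNIV] by (auto intro!: finite_measureI)
  have "cdf (distr (density M h1) borel A) a = cdf (distr (density M h2) borel A) a" for a
    using emeasure_distr_density_comp[of h1 M A borel "{..a}"] emeasure_distr_density_comp[of h2 M A borel "{..a}"]
    by (simp add: cdf_def measure_def eq)
  then have "distr (density M h1) borel A = distr (density M h2) borel A"
    by (intro cdf_unique' finite_borel finite ext) auto
  then show ?thesis
    using emeasure_distr_density_comp[of h1 M A borel B] emeasure_distr_density_comp[of h2 M A borel B] by simp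
qed

lemma nn_integral_comp_mono_of_emeasure_le:
  assumes [measurable]: "A \<in> measurable M N" "h1 \<in> borel_measurable M" "h2 \<in> borel_measurable M"
    "g \<in> borel_measurable N"
    and le: "\<And>B. B \<in> sets N \<Longrightarrow>
      (\<integral>\<^sup>+w. h1 w * indicator B (A w) \<partial>M) \<le> (\<integral>\<^sup>+w. h2 w * indicator B (A w) \<partial>M)"
  shows "(\<integral>\<^sup>+w. h1 w * g (A w) \<partial>M) \<le> (\<integral>\<^sup>+w. h2 w * g (A w) \<partial>M)"
proof -
  have "emeasure (distr (density M h1) N A) B \<le> emeasure (distr (density M h2) N A) B" for B
    using le[of B] by (cases "B \<in> sets N") (simp_all add: emeasure_distr_density_comp emeasure_notin_sets)
  then have "distr (density M h1) N A \<le> distr (density M h2) N A"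
    by (simp add: le_measure_iff le_fun_def)
  then have "(\<integral>\<^sup>+a. g a \<partial>distr (density M h1) N A) \<le> (\<integral>\<^sup>+a. g a \<partial>distr (density M h2) N A)"
    by (rule nn_integral_mono_measure[rotated]) simp
  then show ?thesis
    by (simp add: nn_integral_distr nn_integral_density)
qed

lemma emeasure_split_countable:
  fixes \<mu> :: "real measure" and R :: "real \<Rightarrow> real"
  assumes sets: "sets \<mu> = sets borel" and [measurable]: "R \<in> borel_measurable borel"
    and countable: "countable (range R)" and [measurable]: "B \<in> sets borel"
  shows "emeasure \<mu> B = (\<integral>\<^sup>+c. emeasure \<mu> (B \<inter> R -` {c}) \<partial>count_space (range R))"
proof -
  have pieces: "B \<inter> R -` {c} \<in> sets \<mu>" for c
  proof -
    have "R -` {c} = {x \<in> space borel. R x = c}"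
      by auto
    also have "\<dots> \<in> sets borel"
      by measurable
    finally show ?thesis
      unfolding sets by auto
  qed
  have "B = (\<Union>c\<in>range R. B \<inter> R -` {c})"
    by blast
  moreover have "emeasure \<mu> (\<Union>c\<in>range R. B \<inter> R -` {c})
      = (\<integral>\<^sup>+c. emeasure \<mu> (B \<inter> R -` {c}) \<partial>count_space (range R))"
    by (intro emeasure_UN_countable pieces countable) (auto simp: disjoint_family_on_def)
  ultimately show ?thesis
    by simp
qed

lemma ceiling_grid_approx:
  fixes r :: real
  shows "r \<le> of_int \<lceil>real (Suc k) * r\<rceil> / real (Suc k)"
    and "of_int \<lceil>real (Suc k) * r\<rceil> / real (Suc k) \<le> r + 1 / real (Suc k)"
    and "(\<lambda>k. of_int \<lceil>real (Suc k) * r\<rceil> / real (Suc k)) \<longlonglongrightarrow> r"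
proof -
  have pos: "0 < real (Suc k)" for k
    by simp
  have lower: "r \<le> of_int \<lceil>real (Suc k) * r\<rceil> / real (Suc k)" for k
  proof -
    have "r = real (Suc k) * r / real (Suc k)"
      using pos[of k] by simp
    also have "\<dots> \<le> of_int \<lceil>real (Suc k) * r\<rceil> / real (Suc k)"
      by (intro divide_right_mono le_of_int_ceiling) simp
    finally show ?thesis .
  qed
  have upper: "of_int \<lceil>real (Suc k) * r\<rceil> / real (Suc k) \<le> r + 1 / real (Suc k)" for k
  proof -
    have "of_int \<lceil>real (Suc k) * r\<rceil> / real (Suc k) \<le> (real (Suc k) * r + 1) / real (Suc k)"
      using ceiling_correct[of "real (Suc k) * r"] by (intro divide_right_mono) simp_all
    also have "\<dots> = r + 1 / real (Suc k)"
      using pos[of k] by (simp add: add_divide_distrib)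
    finally show ?thesis .
  qed
  show "r \<le> of_int \<lceil>real (Suc k) * r\<rceil> / real (Suc k)"
    "of_int \<lceil>real (Suc k) * r\<rceil> / real (Suc k) \<le> r + 1 / real (Suc k)"
    by (rule lower upper)+
  have "(\<lambda>k. r + 1 / real (Suc k)) \<longlonglongrightarrow> r + 0"
    by (intro tendsto_add tendsto_const LIMSEQ_Suc[OF lim_const_over_n])
  then have lim: "(\<lambda>k. r + 1 / real (Suc k)) \<longlonglongrightarrow> r"
    by simp
  show "(\<lambda>k. of_int \<lceil>real (Suc k) * r\<rceil> / real (Suc k)) \<longlonglongrightarrow> r"
    by (rule tendsto_sandwich[OF _ _ tendsto_const lim]) (intro always_eventually allI lower upper)+
qed

lemma integral_max_0_diff_tendsto_0:
  fixes f :: "'a \<Rightarrow> real"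
  assumes "integrable M f"
  shows "(\<lambda>n. \<integral>w. max 0 (f w - real n) \<partial>M) \<longlonglongrightarrow> 0"
proof -
  have "(\<lambda>n. \<integral>w. max 0 (f w - real n) \<partial>M) \<longlonglongrightarrow> (\<integral>w. 0 \<partial>M)"
  proof (rule integral_dominated_convergence[where w="\<lambda>w. \<bar>f w\<bar>"])
    show "AE w in M. (\<lambda>n. max 0 (f w - real n)) \<longlonglongrightarrow> 0"
    proof (rule AE_I2)
      fix w
      obtain N where "f w \<le> real N"
        using real_arch_simple by blast
      then have "\<forall>\<^sub>F n in sequentially. max 0 (f w - real n) = 0"
        unfolding eventually_sequentially by (intro exI[of _ N]) auto
      then show "(\<lambda>n. max 0 (f w - real n)) \<longlonglongrightarrow> 0"
        by (rule tendsto_eventually)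
    qed
  qed (use assms in auto)
  then show ?thesis
    by simp
qed

section \<open>The copula transform\<close>

locale copula_transform = prob_space M for M :: "'a measure" +
  fixes \<rho> A :: "'a \<Rightarrow> real" and C C12 Fcond :: "real \<Rightarrow> real \<Rightarrow> real"
  assumes rho_measurable[measurable]: "\<rho> \<in> borel_measurable M"
    and rho_pos: "AE w in M. 0 < \<rho> w"
    and rho_integrable: "integrable M \<rho>"
    and A_measurable[measurable]: "A \<in> borel_measurable M"
    and copula: "copula C"
    and C12: "is_copula_cond_cdf C C12"
    and Fcond: "is_cond_cdf M \<rho> A Fcond"
    and Fcond_continuous: "\<forall>a. continuous_on UNIV (\<lambda>r. Fcond r a)"
    and FA_continuous: "continuous_on UNIV (cdf_rv M A)"
begin

lemma mono_Fcond: "mono (\<lambda>y. Fcond y a)"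
  using Fcond unfolding is_cond_cdf_def by blast

lemma Fcond_mono: "y \<le> y' \<Longrightarrow> Fcond y a \<le> Fcond y' a"
  using mono_Fcond by (rule monoD)

lemma measurable_Fcond[measurable]: "(\<lambda>a. Fcond y a) \<in> borel_measurable borel"
  using Fcond unfolding is_cond_cdf_def by blast

lemma Fcond_at_bot: "((\<lambda>y. Fcond y a) \<longlongrightarrow> 0) at_bot"
  and Fcond_at_top: "((\<lambda>y. Fcond y a) \<longlongrightarrow> 1) at_top"
  using Fcond unfolding is_cond_cdf_def by blast+

lemma prob_rho_le_A_le:
  "measure M {w \<in> space M. \<rho> w \<le> y \<and> A w \<le> a} = (\<integral>w. indicator {..a} (A w) * Fcond y (A w) \<partial>M)"
  using Fcond unfolding is_cond_cdf_def by blast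

lemma Fcond_nonneg: "0 \<le> Fcond y a"
  by (rule mono_tendsto_at_bot_le[OF _ Fcond_at_bot]) (rule mono_Fcond)

lemma Fcond_le_1: "Fcond y a \<le> 1"
  by (rule mono_tendsto_at_top_ge[OF _ Fcond_at_top]) (rule mono_Fcond)

lemma continuous_on_Fcond: "continuous_on UNIV (\<lambda>r. Fcond r a)"
  using Fcond_continuous by blast

lemmas Fcond_level_set =
  continuous_cdf_level_set[OF continuous_on_Fcond mono_Fcond Fcond_at_bot Fcond_at_top]

lemma Fcond_left_approx_rat:
  assumes "t < Fcond r a"
  obtains q where "q \<in> \<rat>" "q < r" "t < Fcond q a"
proof -
  have "isCont (\<lambda>r. Fcond r a) r"
    using continuous_on_Fcond by (simp add: continuous_on_eq_continuous_at)
  then have "((\<lambda>r. Fcond r a) \<longlongrightarrow> Fcond r a) (at_left r)"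
    by (simp add: filterlim_at_split isCont_def)
  then have "\<forall>\<^sub>F y in at_left r. t < Fcond y a"
    using order_tendstoD(1) assms by blast
  then obtain b where b: "b < r" "\<And>y. b < y \<Longrightarrow> y < r \<Longrightarrow> t < Fcond y a"
    unfolding eventually_at_left_field by blast
  obtain q where q: "q \<in> \<rat>" "b < q" "q < r"
    using Rats_dense_in_real[OF b(1)] by blast
  show ?thesis
    by (rule that[OF q(1,3) b(2)[OF q(2,3)]])
qed

lemma measurable_Fcond_comp[measurable (raw)]:
  assumes [measurable]: "f \<in> borel_measurable N" "g \<in> borel_measurable N"
  shows "(\<lambda>x. Fcond (f x) (g x)) \<in> borel_measurable N"
proof (rule borel_measurableI_greater)
  fix c
  have "{w \<in> space N. c < Fcond (f w) (g w)} = (\<Union>q\<in>\<rat>. {w \<in> space N. q < f w \<and> c < Fcond q (g w)})"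
  proof safe
    fix w
    assume "w \<in> space N" "c < Fcond (f w) (g w)"
    moreover obtain q where "q \<in> \<rat>" "q < f w" "c < Fcond q (g w)"
      using Fcond_left_approx_rat[OF \<open>c < Fcond (f w) (g w)\<close>] by blast
    ultimately show "w \<in> (\<Union>q\<in>\<rat>. {w \<in> space N. q < f w \<and> c < Fcond q (g w)})"
      by blast
  next
    fix w q
    assume "c < Fcond q (g w)" "q < f w"
    then show "c < Fcond (f w) (g w)"
      using Fcond_mono[of q "f w" "g w"] by linarith
  qed
  also have "\<dots> \<in> sets N"
    by (intro sets.countable_UN' countable_rat) auto
  finally show "{w \<in> space N. c < Fcond (f w) (g w)} \<in> sets N" .
qed

lemma nn_integral_indicator_A_in:
  assumes [measurable]: "{w \<in> space M. P w} \<in> sets M" "B \<in> sets borel"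
  shows "(\<integral>\<^sup>+w. indicator {w \<in> space M. P w} w * indicator B (A w) \<partial>M) = emeasure M {w \<in> space M. P w \<and> A w \<in> B}"
proof -
  have "(\<integral>\<^sup>+w. indicator {w \<in> space M. P w} w * indicator B (A w) \<partial>M)
      = (\<integral>\<^sup>+w. indicator ({w \<in> space M. P w} \<inter> A -` B \<inter> space M) w \<partial>M)"
    by (rule nn_integral_cong) (auto split: split_indicator)
  also have "\<dots> = emeasure M {w \<in> space M. P w \<and> A w \<in> B}"
    by (subst nn_integral_indicator) (auto intro!: arg_cong[where f="emeasure M"])
  finally show ?thesis .
qed

lemma nn_integral_rho_le_A_in:
  assumes [measurable]: "B \<in> sets borel"
  shows "(\<integral>\<^sup>+w. indicator {w \<in> space M. \<rho> w \<le> y} w * indicator B (A w) \<partial>M)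
       = (\<integral>\<^sup>+w. ennreal (Fcond y (A w)) * indicator B (A w) \<partial>M)"
proof (rule nn_integral_comp_eq_of_atMost)
  show "(\<integral>\<^sup>+ w. indicator {w \<in> space M. \<rho> w \<le> y} w \<partial>M) < \<infinity>"
    by (simp add: less_top[symmetric])
  have "(\<integral>\<^sup>+ w. ennreal (Fcond y (A w)) \<partial>M) \<le> (\<integral>\<^sup>+ w. 1 \<partial>M)"
    by (intro nn_integral_mono) (simp add: Fcond_le_1)
  also have "\<dots> < \<infinity>"
    by (simp add: emeasure_space_1)
  finally show "(\<integral>\<^sup>+ w. ennreal (Fcond y (A w)) \<partial>M) < \<infinity>" .
  fix a
  have "(\<integral>\<^sup>+w. indicator {w\<in>space M. \<rho> w \<le> y} w * indicator {..a} (A w) \<partial>M)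
      = emeasure M {w\<in>space M. \<rho> w \<le> y \<and> A w \<le> a}"
    by (subst nn_integral_indicator_A_in) simp_all
  also have "\<dots> = ennreal (\<integral>w. indicator {..a} (A w) * Fcond y (A w) \<partial>M)"
    by (simp add: emeasure_eq_measure prob_rho_le_A_le)
  also have "\<dots> = (\<integral>\<^sup>+w. ennreal (indicator {..a} (A w) * Fcond y (A w)) \<partial>M)"
    by (rule nn_integral_eq_integral_bounded[symmetric, where c=1])
      (auto simp: Fcond_nonneg Fcond_le_1 split: split_indicator)
  also have "\<dots> = (\<integral>\<^sup>+w. ennreal (Fcond y (A w)) * indicator {..a} (A w) \<partial>M)"
    by (rule nn_integral_cong) (auto split: split_indicator)
  finally show "(\<integral>\<^sup>+w. indicator {w\<in>space M. \<rho> w \<le> y} w * indicator {..a} (A w) \<partial>M)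
      = (\<integral>\<^sup>+w. ennreal (Fcond y (A w)) * indicator {..a} (A w) \<partial>M)" .
qed auto

text \<open>On each level set \<open>R -` {c}\<close> this is the case of the constant bound \<open>c\<close>.\<close>
lemma nn_integral_rho_le_comp_countable:
  assumes [measurable]: "R \<in> borel_measurable borel" "B \<in> sets borel" and "countable (range R)"
  shows "(\<integral>\<^sup>+w. indicator {w \<in> space M. \<rho> w \<le> R (A w)} w * indicator B (A w) \<partial>M)
       = (\<integral>\<^sup>+w. ennreal (Fcond (R (A w)) (A w)) * indicator B (A w) \<partial>M)"
proof -
  define h1 where "h1 w = (indicator {w \<in> space M. \<rho> w \<le> R (A w)} w :: ennreal)" for w
  define h2 where "h2 w = ennreal (Fcond (R (A w)) (A w))" for w
  have [measurable]: "h1 \<in> borel_measurable M" "h2 \<in> borel_measurable M"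
    unfolding h1_def h2_def by measurable
  let ?\<nu> = "\<lambda>h. distr (density M h) borel A"
  have [measurable]: "B \<inter> R -` {c} \<in> sets borel" for c
  proof -
    have "R -` {c} = {a \<in> space borel. R a = c}"
      by auto
    also have "\<dots> \<in> sets borel"
      by measurable
    finally show ?thesis
      by auto
  qed
  have pieces: "emeasure (?\<nu> h1) (B \<inter> R -` {c}) = emeasure (?\<nu> h2) (B \<inter> R -` {c})" for c
  proof -
    have "emeasure (?\<nu> h1) (B \<inter> R -` {c})
        = (\<integral>\<^sup>+w. indicator {w \<in> space M. \<rho> w \<le> c} w * indicator (B \<inter> R -` {c}) (A w) \<partial>M)"
      by (subst emeasure_distr_density_comp) (auto simp: h1_def intro!: nn_integral_cong split: split_indicator)
    also have "\<dots> = (\<integral>\<^sup>+w. ennreal (Fcond c (A w)) * indicator (B \<inter> R -` {c}) (A w) \<partial>M)"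
      by (rule nn_integral_rho_le_A_in) measurable
    also have "\<dots> = emeasure (?\<nu> h2) (B \<inter> R -` {c})"
      by (subst emeasure_distr_density_comp) (auto simp: h2_def intro!: nn_integral_cong split: split_indicator)
    finally show ?thesis .
  qed
  have "emeasure (?\<nu> h1) B = (\<integral>\<^sup>+c. emeasure (?\<nu> h1) (B \<inter> R -` {c}) \<partial>count_space (range R))"
    by (rule emeasure_split_countable) (simp_all add: assms)
  also have "\<dots> = (\<integral>\<^sup>+c. emeasure (?\<nu> h2) (B \<inter> R -` {c}) \<partial>count_space (range R))"
    by (simp add: pieces)
  also have "\<dots> = emeasure (?\<nu> h2) B"
    by (rule emeasure_split_countable[symmetric]) (simp_all add: assms)
  finally show ?thesis
    by (simp add: emeasure_distr_density_comp h1_def h2_def)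
qed

lemma prob_rho_le_comp_countable:
  assumes [measurable]: "R \<in> borel_measurable borel" "B \<in> sets borel" and "countable (range R)"
  shows "measure M {w \<in> space M. \<rho> w \<le> R (A w) \<and> A w \<in> B}
       = (\<integral>w. Fcond (R (A w)) (A w) * indicator B (A w) \<partial>M)"
proof -
  have "ennreal (measure M {w \<in> space M. \<rho> w \<le> R (A w) \<and> A w \<in> B})
      = (\<integral>\<^sup>+w. indicator {w \<in> space M. \<rho> w \<le> R (A w)} w * indicator B (A w) \<partial>M)"
    by (subst nn_integral_indicator_A_in) (simp_all add: emeasure_eq_measure)
  also have "\<dots> = (\<integral>\<^sup>+w. ennreal (Fcond (R (A w)) (A w) * indicator B (A w)) \<partial>M)"
    using assms by (subst nn_integral_rho_le_comp_countable) (auto intro!: nn_integral_cong split: split_indicator)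
  also have "\<dots> = ennreal (\<integral>w. Fcond (R (A w)) (A w) * indicator B (A w) \<partial>M)"
    by (rule nn_integral_eq_integral_bounded[where c=1])
      (auto simp: Fcond_nonneg Fcond_le_1 split: split_indicator)
  finally show ?thesis
    by (subst (asm) ennreal_inj) (auto simp: Fcond_nonneg intro!: integral_nonneg_AE)
qed

text \<open>Approximating \<open>R\<close> from above by grid-valued functions and using the continuity of \<open>Fcond\<close>
  in its first argument removes the countability assumption.\<close>
lemma prob_rho_le_comp:
  assumes [measurable]: "R \<in> borel_measurable borel" "B \<in> sets borel"
  shows "measure M {w \<in> space M. \<rho> w \<le> R (A w) \<and> A w \<in> B}
       = (\<integral>w. Fcond (R (A w)) (A w) * indicator B (A w) \<partial>M)"
proof -
  define R' where "R' k a = of_int \<lceil>real (Suc k) * R a\<rceil> / real (Suc k)" for k a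
  have [measurable]: "R' k \<in> borel_measurable borel" for k
    unfolding R'_def by measurable
  have "countable (range (R' k))" for k
  proof (rule countable_subset)
    show "range (R' k) \<subseteq> range (\<lambda>j::int. of_int j / real (Suc k))"
      unfolding R'_def by auto
  qed simp
  then have approx_eq: "measure M {w \<in> space M. \<rho> w \<le> R' k (A w) \<and> A w \<in> B}
      = (\<integral>w. Fcond (R' k (A w)) (A w) * indicator B (A w) \<partial>M)" for k
    by (intro prob_rho_le_comp_countable) auto
  have above: "R a \<le> R' k a" and lim: "(\<lambda>k. R' k a) \<longlonglongrightarrow> R a" for k a
    unfolding R'_def by (rule ceiling_grid_approx)+
  have "(\<lambda>k. measure M {w \<in> space M. \<rho> w \<le> R' k (A w) \<and> A w \<in> B})
      \<longlonglongrightarrow> measure M {w \<in> space M. \<rho> w \<le> R (A w) \<and> A w \<in> B}"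
    using above lim by (intro measure_le_tendsto_of_above) simp_all
  moreover have "(\<lambda>k. \<integral>w. Fcond (R' k (A w)) (A w) * indicator B (A w) \<partial>M)
      \<longlonglongrightarrow> (\<integral>w. Fcond (R (A w)) (A w) * indicator B (A w) \<partial>M)"
  proof (rule integral_dominated_convergence[where w="\<lambda>_. 1"])
    show "AE w in M. (\<lambda>k. Fcond (R' k (A w)) (A w) * indicator B (A w))
        \<longlonglongrightarrow> Fcond (R (A w)) (A w) * indicator B (A w)"
    proof (rule AE_I2, rule tendsto_mult_right)
      fix w
      have "isCont (\<lambda>r. Fcond r (A w)) (R (A w))"
        using Fcond_continuous continuous_on_eq_continuous_at by blast
      then show "(\<lambda>k. Fcond (R' k (A w)) (A w)) \<longlonglongrightarrow> Fcond (R (A w)) (A w)"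
        by (rule isCont_tendsto_compose[OF _ lim])
    qed
    show "AE w in M. norm (Fcond (R' k (A w)) (A w) * indicator B (A w)) \<le> 1" for k
      by (simp add: Fcond_nonneg Fcond_le_1 indicator_def)
  qed auto
  ultimately show ?thesis
    unfolding approx_eq by (rule LIMSEQ_unique)
qed

definition UA :: "'a \<Rightarrow> real"
  where "UA w = cdf_rv M A (A w)"

definition Urho :: "'a \<Rightarrow> real"
  where "Urho w = Fcond (\<rho> w) (A w)"

lemma mono_cdf_A: "mono (cdf_rv M A)"
  by (rule mono_cdf_rv[OF A_measurable])

lemma measurable_cdf_A[measurable]: "cdf_rv M A \<in> borel_measurable borel"
  by (rule borel_measurable_mono[OF mono_cdf_A])

lemma measurable_UA[measurable]: "UA \<in> borel_measurable M"
  and measurable_Urho[measurable]: "Urho \<in> borel_measurable M"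
  unfolding UA_def Urho_def by measurable

lemma UA_nonneg: "0 \<le> UA w" and UA_le_1: "UA w \<le> 1"
  unfolding UA_def by (rule cdf_rv_nonneg[OF A_measurable] cdf_rv_le_1[OF A_measurable])+

lemma Urho_nonneg: "0 \<le> Urho w"
  unfolding Urho_def by (rule Fcond_nonneg)

lemma Urho_le_1: "Urho w \<le> 1"
  unfolding Urho_def by (rule Fcond_le_1)

text \<open>\<open>{Urho \<le> \<tau> A} = {\<rho> \<le> Q A}\<close> for the conditional \<open>\<tau>\<close>-quantile \<open>Q\<close> of \<open>\<rho>\<close>,
  and \<open>Fcond (Q a) a = \<tau> a\<close> by continuity.\<close>
lemma prob_Urho_le_comp_interior:
  assumes [measurable]: "\<tau> \<in> borel_measurable borel" "B \<in> sets borel"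
    and B: "B \<subseteq> {a. 0 < \<tau> a \<and> \<tau> a < 1}"
  shows "measure M {w \<in> space M. Urho w \<le> \<tau> (A w) \<and> A w \<in> B} = (\<integral>w. \<tau> (A w) * indicator B (A w) \<partial>M)"
proof -
  define Q where "Q a = (if 0 < \<tau> a \<and> \<tau> a < 1 then Sup {r. Fcond r a \<le> \<tau> a} else 0)" for a
  have level: "Fcond (Q a) a = \<tau> a" "Fcond r a \<le> \<tau> a \<longleftrightarrow> r \<le> Q a" if "0 < \<tau> a" "\<tau> a < 1" for a r
  proof -
    have Q: "Q a = Sup {r. Fcond r a \<le> \<tau> a}"
      using that by (simp add: Q_def)
    show "Fcond (Q a) a = \<tau> a" "Fcond r a \<le> \<tau> a \<longleftrightarrow> r \<le> Q a"
      unfolding Q by (rule Fcond_level_set[OF that])+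
  qed
  have [measurable]: "Q \<in> borel_measurable borel"
    unfolding borel_measurable_iff_less
  proof
    fix s
    have "Q a < s \<longleftrightarrow> (\<not> (0 < \<tau> a \<and> \<tau> a < 1) \<and> 0 < s) \<or> (0 < \<tau> a \<and> \<tau> a < 1 \<and> \<tau> a < Fcond s a)"
      for a
    proof (cases "0 < \<tau> a \<and> \<tau> a < 1")
      case True
      then show ?thesis
        using level(2)[of a s] by auto
    next
      case False
      then show ?thesis
        by (auto simp: Q_def)
    qed
    then have "{a \<in> space borel. Q a < s}
        = {a \<in> space borel. (\<not> (0 < \<tau> a \<and> \<tau> a < 1) \<and> 0 < s) \<or> (0 < \<tau> a \<and> \<tau> a < 1 \<and> \<tau> a < Fcond s a)}"
      by blast
    also have "\<dots> \<in> sets borel"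
      by measurable
    finally show "{a \<in> space borel. Q a < s} \<in> sets borel" .
  qed
  have "{w \<in> space M. Urho w \<le> \<tau> (A w) \<and> A w \<in> B} = {w \<in> space M. \<rho> w \<le> Q (A w) \<and> A w \<in> B}"
    using B level(2) by (auto simp: Urho_def)
  then have "measure M {w \<in> space M. Urho w \<le> \<tau> (A w) \<and> A w \<in> B}
      = (\<integral>w. Fcond (Q (A w)) (A w) * indicator B (A w) \<partial>M)"
    by (simp add: prob_rho_le_comp)
  also have "\<dots> = (\<integral>w. \<tau> (A w) * indicator B (A w) \<partial>M)"
    using B level(1) by (intro Bochner_Integration.integral_cong) (auto split: split_indicator)
  finally show ?thesis .
qed

lemma AE_Urho_pos: "AE w in M. 0 < Urho w"
proof -
  have "measure M {w \<in> space M. Urho w \<le> 0} \<le> 0 + e" if "0 < e" for e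
  proof -
    have "measure M {w \<in> space M. Urho w \<le> 0} \<le> measure M {w \<in> space M. Urho w \<le> min e (1/2) \<and> A w \<in> UNIV}"
      using that by (intro finite_measure_mono) auto
    also have "\<dots> = min e (1/2)"
      using that prob_Urho_le_comp_interior[of "\<lambda>_. min e (1/2)" UNIV] by (simp add: prob_space)
    finally show ?thesis
      by simp
  qed
  then have "measure M {w \<in> space M. Urho w \<le> 0} \<le> 0"
    by (rule field_le_epsilon)
  then have "measure M {w \<in> space M. Urho w \<le> 0} = 0"
    by (simp add: antisym)
  moreover have "{w \<in> space M. 0 < Urho w} = space M - {w \<in> space M. Urho w \<le> 0}"
    by auto
  ultimately have "prob {w \<in> space M. 0 < Urho w} = 1"
    by (simp add: finite_measure_compl prob_space)
  from AE_prob_1[OF this] show ?thesis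
    by eventually_elim auto
qed

lemma prob_Urho_le_comp:
  assumes [measurable]: "\<tau> \<in> borel_measurable borel" "B \<in> sets borel"
    and \<tau>: "\<And>a. 0 \<le> \<tau> a" "\<And>a. \<tau> a \<le> 1"
  shows "measure M {w \<in> space M. Urho w \<le> \<tau> (A w) \<and> A w \<in> B} = (\<integral>w. \<tau> (A w) * indicator B (A w) \<partial>M)"
proof -
  define B' where "B' = B \<inter> {a. 0 < \<tau> a \<and> \<tau> a < 1}"
  define B1 where "B1 = B \<inter> {a. \<tau> a = 1}"
  have [measurable]: "B' \<in> sets borel" "B1 \<in> sets borel"
    unfolding B'_def B1_def by measurable
  have bounded: "integrable M (\<lambda>w. f (A w) * indicator S (A w))"
    if [measurable]: "f \<in> borel_measurable borel" "S \<in> sets borel" and "\<And>a. \<bar>f a\<bar> \<le> 1"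
    for f :: "real \<Rightarrow> real" and S
    using that(3) by (intro integrable_const_bound[where B=1]) (auto split: split_indicator)
  \<comment> \<open>Where \<open>\<tau> (A w) = 0\<close>, the event \<open>Urho w \<le> 0\<close> is null.\<close>
  have split: "AE w in M. indicator {w \<in> space M. Urho w \<le> \<tau> (A w) \<and> A w \<in> B} w
      = indicator {w \<in> space M. Urho w \<le> \<tau> (A w) \<and> A w \<in> B'} w + (indicator B1 (A w) :: real)"
    using AE_space AE_Urho_pos
  proof eventually_elim
    case (elim w)
    then show ?case
      using \<tau>[of "A w"] Urho_le_1[of w] by (auto simp: B'_def B1_def indicator_def)
  qed
  have "measure M {w \<in> space M. Urho w \<le> \<tau> (A w) \<and> A w \<in> B}
      = (\<integral>w. indicator {w \<in> space M. Urho w \<le> \<tau> (A w) \<and> A w \<in> B} w \<partial>M)"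
    by simp
  also have "\<dots> = (\<integral>w. indicator {w \<in> space M. Urho w \<le> \<tau> (A w) \<and> A w \<in> B'} w + indicator B1 (A w) \<partial>M)"
    using split by (rule integral_cong_AE[rotated 2]) simp_all
  also have "\<dots> = measure M {w \<in> space M. Urho w \<le> \<tau> (A w) \<and> A w \<in> B'} + (\<integral>w. indicator B1 (A w) \<partial>M)"
    using bounded[of "\<lambda>_. 1" B1]
    by (subst Bochner_Integration.integral_add) (simp_all add: integrable_real_indicator emeasure_eq_measure)
  also have "\<dots> = (\<integral>w. \<tau> (A w) * indicator B' (A w) \<partial>M) + (\<integral>w. \<tau> (A w) * indicator B1 (A w) \<partial>M)"
  proof -
    have "measure M {w \<in> space M. Urho w \<le> \<tau> (A w) \<and> A w \<in> B'} = (\<integral>w. \<tau> (A w) * indicator B' (A w) \<partial>M)"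
      by (rule prob_Urho_le_comp_interior) (auto simp: B'_def)
    moreover have "(\<integral>w. indicator B1 (A w) \<partial>M) = (\<integral>w. \<tau> (A w) * indicator B1 (A w) \<partial>M)"
      by (rule Bochner_Integration.integral_cong) (auto simp: B1_def indicator_def)
    ultimately show ?thesis
      by simp
  qed
  also have "\<dots> = (\<integral>w. \<tau> (A w) * indicator B' (A w) + \<tau> (A w) * indicator B1 (A w) \<partial>M)"
    using \<tau> by (intro Bochner_Integration.integral_add[symmetric] bounded) (auto simp: abs_le_iff)
  also have "\<dots> = (\<integral>w. \<tau> (A w) * indicator B (A w) \<partial>M)"
  proof (rule Bochner_Integration.integral_cong)
    fix w
    show "\<tau> (A w) * indicator B' (A w) + \<tau> (A w) * indicator B1 (A w) = \<tau> (A w) * indicator B (A w)"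
      using \<tau>[of "A w"] by (auto simp: B'_def B1_def indicator_def)
  qed simp
  finally show ?thesis .
qed

lemma prob_UA_le: "0 \<le> t \<Longrightarrow> t \<le> 1 \<Longrightarrow> measure M {w \<in> space M. UA w \<le> t} = t"
  unfolding UA_def by (rule prob_cdf_rv_comp_le[OF A_measurable FA_continuous])

lemma integral_UA:
  fixes g :: "real \<Rightarrow> real"
  assumes [measurable]: "g \<in> borel_measurable borel"
  shows "(\<integral>w. g (UA w) \<partial>M) = (\<integral>t. indicator {0..1} t * g t \<partial>lborel)"
  by (rule integral_comp_uniform) (simp_all add: prob_UA_le)

lemma AE_A_le_iff_UA_le: "AE w in M. A w \<le> a \<longleftrightarrow> UA w \<le> cdf_rv M A a"
proof -
  define S1 where "S1 = {w \<in> space M. A w \<le> a}"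
  define S2 where "S2 = {w \<in> space M. UA w \<le> cdf_rv M A a}"
  have [measurable]: "S1 \<in> sets M" "S2 \<in> sets M"
    unfolding S1_def S2_def by measurable
  have sub: "S1 \<subseteq> S2"
    using mono_cdf_A by (auto simp: S1_def S2_def UA_def mono_def)
  have "measure M S2 = cdf_rv M A a"
    unfolding S2_def by (intro prob_UA_le cdf_rv_nonneg[OF A_measurable] cdf_rv_le_1[OF A_measurable])
  moreover have "measure M S1 = cdf_rv M A a"
    unfolding S1_def cdf_rv_def ..
  ultimately have "emeasure M (S2 - S1) = 0"
    using finite_measure_Diff[of S2 S1] sub by (simp add: emeasure_eq_measure)
  moreover have "{w \<in> space M. \<not> (A w \<le> a \<longleftrightarrow> UA w \<le> cdf_rv M A a)} = S2 - S1"
    using sub by (auto simp: S1_def S2_def)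
  ultimately show ?thesis
    by (subst AE_iff_measurable[where N="S2 - S1"]) auto
qed

lemma prob_A_in:
  assumes [measurable]: "B \<in> sets borel"
  shows "measure M {w \<in> space M. A w \<in> B} = (\<integral>w. indicator B (A w) \<partial>M)"
proof -
  have "(\<integral>w. indicator B (A w) \<partial>M) = (\<integral>w. indicator {w \<in> space M. A w \<in> B} w \<partial>M :: real)"
    by (rule Bochner_Integration.integral_cong) (auto split: split_indicator)
  then show ?thesis
    by simp
qed

lemma C12_mono: "0 \<le> v \<Longrightarrow> v \<le> 1 \<Longrightarrow> u \<le> u' \<Longrightarrow> C12 u v \<le> C12 u' v"
  using C12 unfolding is_copula_cond_cdf_def mono_def by auto

lemma C12_below_0: "0 \<le> v \<Longrightarrow> v \<le> 1 \<Longrightarrow> u < 0 \<Longrightarrow> C12 u v = 0"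
  and C12_above_1: "0 \<le> v \<Longrightarrow> v \<le> 1 \<Longrightarrow> 1 \<le> u \<Longrightarrow> C12 u v = 1"
  using C12 unfolding is_copula_cond_cdf_def by auto

lemma measurable_C12[measurable]: "(\<lambda>v. C12 u v) \<in> borel_measurable borel"
  using C12 unfolding is_copula_cond_cdf_def by auto

lemma C_eq_integral_C12: "0 \<le> u \<Longrightarrow> u \<le> 1 \<Longrightarrow> 0 \<le> v \<Longrightarrow> v \<le> 1 \<Longrightarrow> C u v = (LBINT t:{0..v}. C12 u t)"
  using C12 unfolding is_copula_cond_cdf_def by auto

lemma C_boundary: "0 \<le> u \<Longrightarrow> u \<le> 1 \<Longrightarrow> C u 0 = 0 \<and> C 0 u = 0 \<and> C u 1 = u \<and> C 1 u = u"
  using copula unfolding copula_def by auto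

lemma C12_nonneg: "0 \<le> v \<Longrightarrow> v \<le> 1 \<Longrightarrow> 0 \<le> C12 u v"
  using C12_mono[of v "min u (-1)" u] C12_below_0[of v "min u (-1)"] by simp

lemma C12_le_1: "0 \<le> v \<Longrightarrow> v \<le> 1 \<Longrightarrow> C12 u v \<le> 1"
  using C12_mono[of v u "max u 1"] C12_above_1[of v "max u 1"] by simp

lemma C12_UA_mono: "u \<le> u' \<Longrightarrow> C12 u (UA w) \<le> C12 u' (UA w)"
  by (rule C12_mono[OF UA_nonneg UA_le_1])

lemma C12_UA_below_0: "u < 0 \<Longrightarrow> C12 u (UA w) = 0"
  and C12_UA_above_1: "1 \<le> u \<Longrightarrow> C12 u (UA w) = 1"
  by (rule C12_below_0[OF UA_nonneg UA_le_1] C12_above_1[OF UA_nonneg UA_le_1], assumption)+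

lemma C12_UA_nonneg: "0 \<le> C12 u (UA w)"
  and C12_UA_le_1: "C12 u (UA w) \<le> 1"
  by (rule C12_nonneg[OF UA_nonneg UA_le_1] C12_le_1[OF UA_nonneg UA_le_1])+

text \<open>\<open>copula_prob B u = P(U \<le> u, A \<in> B)\<close> for any \<open>U\<close> such that \<open>(U, UA)\<close> has distribution function \<open>C\<close>.\<close>
definition copula_prob :: "real set \<Rightarrow> real \<Rightarrow> real"
  where "copula_prob B u = (\<integral>w. C12 u (UA w) * indicator B (A w) \<partial>M)"

lemma integrable_C12_UA:
  "B \<in> sets borel \<Longrightarrow> integrable M (\<lambda>w. C12 u (UA w) * indicator B (A w))"
  using C12_UA_nonneg C12_UA_le_1
  by (intro integrable_const_bound[where B=1]) (auto split: split_indicator)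

lemma copula_prob_UNIV: "0 \<le> u \<Longrightarrow> u \<le> 1 \<Longrightarrow> copula_prob UNIV u = u"
  and copula_prob_atMost: "0 \<le> u \<Longrightarrow> u \<le> 1 \<Longrightarrow> copula_prob {..a} u = C u (cdf_rv M A a)"
proof -
  have C_eq: "(\<integral>w. C12 u (UA w) * indicator {..v} (UA w) \<partial>M) = C u v"
    if "0 \<le> u" "u \<le> 1" "0 \<le> v" "v \<le> 1" for u v
  proof -
    have "(\<integral>w. C12 u (UA w) * indicator {..v} (UA w) \<partial>M)
        = (\<integral>t. indicator {0..1} t * (C12 u t * indicator {..v} t) \<partial>lborel)"
      by (rule integral_UA) measurable
    also have "\<dots> = (LBINT t:{0..v}. C12 u t)"
      unfolding set_lebesgue_integral_def using that
      by (intro Bochner_Integration.integral_cong) (auto split: split_indicator)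
    finally show ?thesis
      using C_eq_integral_C12 that by simp
  qed
  assume u: "0 \<le> u" "u \<le> 1"
  show "copula_prob UNIV u = u"
    using C_eq[OF u, of 1] C_boundary[OF u] UA_le_1 by (simp add: copula_prob_def indicator_def)
  have "copula_prob {..a} u = (\<integral>w. C12 u (UA w) * indicator {..cdf_rv M A a} (UA w) \<partial>M)"
    unfolding copula_prob_def
    by (rule integral_cong_AE) (use AE_A_le_iff_UA_le[of a] in \<open>auto split: split_indicator\<close>)
  also have "\<dots> = C u (cdf_rv M A a)"
    using u by (intro C_eq cdf_rv_nonneg[OF A_measurable] cdf_rv_le_1[OF A_measurable])
  finally show "copula_prob {..a} u = C u (cdf_rv M A a)" .
qed

lemma copula_prob_mono: "B \<in> sets borel \<Longrightarrow> u \<le> u' \<Longrightarrow> copula_prob B u \<le> copula_prob B u'"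
  unfolding copula_prob_def
  by (intro integral_mono integrable_C12_UA) (auto simp: C12_UA_mono split: split_indicator)

lemma copula_prob_le_UNIV: "B \<in> sets borel \<Longrightarrow> copula_prob B u \<le> copula_prob UNIV u"
  unfolding copula_prob_def
  by (intro integral_mono integrable_C12_UA) (auto simp: C12_UA_nonneg split: split_indicator)

lemma copula_prob_lipschitz:
  assumes [measurable]: "B \<in> sets borel" and u: "0 \<le> u" "u \<le> u'" "u' \<le> 1"
  shows "copula_prob B u' \<le> copula_prob B u + (u' - u)"
proof -
  have "copula_prob B u' - copula_prob B u = (\<integral>w. (C12 u' (UA w) - C12 u (UA w)) * indicator B (A w) \<partial>M)"
    unfolding copula_prob_def using integrable_C12_UA[of B u] integrable_C12_UA[of B u']
    by (simp add: left_diff_distrib)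
  also have "\<dots> \<le> (\<integral>w. C12 u' (UA w) - C12 u (UA w) \<partial>M)"
    using integrable_C12_UA[of B] integrable_C12_UA[of UNIV] C12_UA_mono[OF u(2)]
    by (intro integral_mono) (auto simp: left_diff_distrib split: split_indicator)
  also have "\<dots> = copula_prob UNIV u' - copula_prob UNIV u"
    unfolding copula_prob_def using integrable_C12_UA[of UNIV u] integrable_C12_UA[of UNIV u'] by simp
  also have "\<dots> = u' - u"
    using u by (simp add: copula_prob_UNIV)
  finally show ?thesis
    by simp
qed

lemma prob_Urho_gt_C12:
  assumes [measurable]: "B \<in> sets borel"
  shows "measure M {w \<in> space M. 1 - C12 u (UA w) < Urho w \<and> A w \<in> B} = copula_prob B u"
proof -
  define \<tau> where "\<tau> a = 1 - C12 u (cdf_rv M A a)" for a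
  have [measurable]: "\<tau> \<in> borel_measurable borel"
    unfolding \<tau>_def by measurable
  have \<tau>_UA: "\<tau> (A w) = 1 - C12 u (UA w)" for w
    by (simp add: \<tau>_def UA_def)
  have \<tau>: "0 \<le> \<tau> a" "\<tau> a \<le> 1" for a
    using C12_nonneg[of "cdf_rv M A a" u] C12_le_1[of "cdf_rv M A a" u]
      cdf_rv_nonneg[OF A_measurable, of a] cdf_rv_le_1[OF A_measurable, of a]
    by (auto simp: \<tau>_def)
  have "{w \<in> space M. 1 - C12 u (UA w) < Urho w \<and> A w \<in> B}
      = {w \<in> space M. A w \<in> B} - {w \<in> space M. Urho w \<le> \<tau> (A w) \<and> A w \<in> B}"
    by (auto simp: \<tau>_UA)
  then have "measure M {w \<in> space M. 1 - C12 u (UA w) < Urho w \<and> A w \<in> B}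
      = measure M {w \<in> space M. A w \<in> B} - measure M {w \<in> space M. Urho w \<le> \<tau> (A w) \<and> A w \<in> B}"
    by (simp add: finite_measure_Diff subset_eq)
  also have "\<dots> = (\<integral>w. indicator B (A w) \<partial>M) - (\<integral>w. \<tau> (A w) * indicator B (A w) \<partial>M)"
    using \<tau> by (simp add: prob_A_in prob_Urho_le_comp)
  also have "\<dots> = (\<integral>w. indicator B (A w) - \<tau> (A w) * indicator B (A w) \<partial>M)"
    using \<tau> by (intro Bochner_Integration.integral_diff[symmetric] integrable_const_bound[where B=1])
      (auto simp: abs_le_iff split: split_indicator)
  also have "\<dots> = copula_prob B u"
    unfolding copula_prob_def by (intro Bochner_Integration.integral_cong) (auto simp: \<tau>_UA split: split_indicator)
  finally show ?thesis .
qed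

definition Z :: "'a \<Rightarrow> real"
  where "Z w = cond_quantile C12 (1 - Urho w) (UA w)"

lemma Z_eq_Inf: "Z w = Inf {u. 1 - Urho w < C12 u (UA w)}"
  unfolding Z_def cond_quantile_def rquantile_def ..

lemma bdd_below_C12_UA_level: "bdd_below {u. 1 - Urho w < C12 u (UA w)}"
proof (rule bdd_belowI)
  fix u
  assume "u \<in> {u. 1 - Urho w < C12 u (UA w)}"
  then show "0 \<le> u"
    using C12_UA_below_0[of u w] Urho_le_1[of w] by (cases "u < 0") auto
qed

lemma Z_less_iff:
  assumes "0 < Urho w"
  shows "Z w < z \<longleftrightarrow> (\<exists>u<z. 1 - C12 u (UA w) < Urho w)"
proof -
  have "1 \<in> {u. 1 - Urho w < C12 u (UA w)}"
    using C12_UA_above_1[of 1 w] assms by simp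
  then have "Z w < z \<longleftrightarrow> (\<exists>u\<in>{u. 1 - Urho w < C12 u (UA w)}. u < z)"
    unfolding Z_eq_Inf by (intro cInf_less_iff bdd_below_C12_UA_level) auto
  then show ?thesis
    by auto
qed

lemma Z_le_of_C12:
  assumes "1 - C12 u (UA w) < Urho w"
  shows "Z w \<le> u"
  unfolding Z_eq_Inf using assms by (intro cInf_lower bdd_below_C12_UA_level) simp

lemma C12_gt_of_Z_less:
  assumes "0 < Urho w" "Z w < u"
  shows "1 - C12 u (UA w) < Urho w"
proof -
  obtain u' where "u' < u" "1 - C12 u' (UA w) < Urho w"
    using Z_less_iff assms by blast
  moreover have "C12 u' (UA w) \<le> C12 u (UA w)"
    using \<open>u' < u\<close> by (intro C12_UA_mono) simp
  ultimately show ?thesis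
    by simp
qed

lemma Z_less_obtain_rat:
  assumes "0 < Urho w" "Z w < z"
  obtains q where "q \<in> \<rat>" "q < z" "1 - C12 q (UA w) < Urho w"
proof -
  obtain u where "u < z" "1 - C12 u (UA w) < Urho w"
    using assms Z_less_iff by blast
  moreover obtain q where "q \<in> \<rat>" "u < q" "q < z"
    using Rats_dense_in_real[OF \<open>u < z\<close>] by blast
  moreover have "C12 u (UA w) \<le> C12 q (UA w)"
    using \<open>u < q\<close> by (intro C12_UA_mono) simp
  ultimately show ?thesis
    using that by fastforce
qed

text \<open>On the null set \<open>Urho w = 0\<close>, \<open>Z w\<close> is the unspecified value \<open>Inf {}\<close>.\<close>
lemma Z_eq_Inf_empty:
  assumes "Urho w = 0"
  shows "Z w = Inf {}"
proof -
  have "{u. 1 - Urho w < C12 u (UA w)} = {}"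
    using assms C12_UA_le_1[of _ w] by (auto simp: not_less)
  then show ?thesis
    unfolding Z_eq_Inf by simp
qed

lemma measurable_Z[measurable]: "Z \<in> borel_measurable M"
proof (rule borel_measurableI_less)
  fix z
  have "{w \<in> space M. Z w < z}
      = (\<Union>q\<in>\<rat>. {w \<in> space M. 0 < Urho w \<and> q < z \<and> 1 - C12 q (UA w) < Urho w})
        \<union> {w \<in> space M. Urho w = 0 \<and> Inf ({} :: real set) < z}"
  proof (intro set_eqI iffI)
    fix w
    assume w: "w \<in> {w \<in> space M. Z w < z}"
    show "w \<in> (\<Union>q\<in>\<rat>. {w \<in> space M. 0 < Urho w \<and> q < z \<and> 1 - C12 q (UA w) < Urho w})
        \<union> {w \<in> space M. Urho w = 0 \<and> Inf ({} :: real set) < z}"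
    proof (cases "0 < Urho w")
      case True
      then obtain q where "q \<in> \<rat>" "q < z" "1 - C12 q (UA w) < Urho w"
        using w by (auto elim: Z_less_obtain_rat)
      then show ?thesis
        using True w by auto
    next
      case False
      then have "Urho w = 0"
        using Urho_nonneg[of w] by simp
      then show ?thesis
        using w by (simp add: Z_eq_Inf_empty)
    qed
  next
    fix w
    assume "w \<in> (\<Union>q\<in>\<rat>. {w \<in> space M. 0 < Urho w \<and> q < z \<and> 1 - C12 q (UA w) < Urho w})
        \<union> {w \<in> space M. Urho w = 0 \<and> Inf ({} :: real set) < z}"
    then show "w \<in> {w \<in> space M. Z w < z}"
      using Z_le_of_C12 by (force simp: Z_eq_Inf_empty)
  qed
  also have "\<dots> \<in> sets M"
    by (intro sets.Un sets.countable_UN' countable_rat) auto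
  finally show "{w \<in> space M. Z w < z} \<in> sets M" .
qed

lemma prob_Z_less_A_in:
  assumes [measurable]: "B \<in> sets borel" and z: "0 \<le> z" "z \<le> 1"
  shows "measure M {w \<in> space M. Z w < z \<and> A w \<in> B} = copula_prob B z"
proof (rule antisym)
  have "measure M {w \<in> space M. Z w < z \<and> A w \<in> B}
      \<le> measure M {w \<in> space M. 1 - C12 z (UA w) < Urho w \<and> A w \<in> B}"
    using AE_Urho_pos by (intro finite_measure_mono_AE) (auto elim!: eventually_mono intro: C12_gt_of_Z_less)
  then show "measure M {w \<in> space M. Z w < z \<and> A w \<in> B} \<le> copula_prob B z"
    by (simp add: prob_Urho_gt_C12)
  show "copula_prob B z \<le> measure M {w \<in> space M. Z w < z \<and> A w \<in> B}"
  proof (cases "z = 0")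
    case True
    then have "copula_prob B z \<le> 0"
      using copula_prob_le_UNIV[of B z] copula_prob_UNIV[of z] by simp
    then show ?thesis
      using measure_nonneg order_trans by blast
  next
    case False
    have "copula_prob B z \<le> measure M {w \<in> space M. Z w < z \<and> A w \<in> B} + e" if "0 < e" for e
    proof -
      define u where "u = z - min e (z / 2)"
      have u: "0 \<le> u" "u < z" "z - u \<le> e"
        using that z False by (auto simp: u_def)
      have "copula_prob B z \<le> copula_prob B u + (z - u)"
        using u z by (intro copula_prob_lipschitz) auto
      also have "copula_prob B u = measure M {w \<in> space M. 1 - C12 u (UA w) < Urho w \<and> A w \<in> B}"
        by (simp add: prob_Urho_gt_C12)
      also have "\<dots> \<le> measure M {w \<in> space M. Z w < z \<and> A w \<in> B}"
        using Z_le_of_C12 \<open>u < z\<close> by (intro finite_measure_mono) (force+)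
      finally show ?thesis
        using u by simp
    qed
    then show ?thesis
      by (rule field_le_epsilon)
  qed
qed

lemma prob_Z_less: "0 \<le> z \<Longrightarrow> z \<le> 1 \<Longrightarrow> measure M {w \<in> space M. Z w < z} = z"
  using prob_Z_less_A_in[of UNIV z] by (simp add: copula_prob_UNIV)

lemma prob_Z_less_A_le:
  "0 \<le> z \<Longrightarrow> z \<le> 1 \<Longrightarrow> measure M {w \<in> space M. Z w < z \<and> A w \<le> a} = C z (cdf_rv M A a)"
  using prob_Z_less_A_in[of "{..a}" z] by (simp add: copula_prob_atMost)

lemma integral_Z:
  fixes g :: "real \<Rightarrow> real"
  assumes [measurable]: "g \<in> borel_measurable borel"
  shows "(\<integral>w. g (Z w) \<partial>M) = (\<integral>t. indicator {0..1} t * g t \<partial>lborel)"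
  by (rule integral_comp_uniform) (simp_all add: prob_le_of_prob_less prob_Z_less)

lemma AE_Z_unit_interval: "AE w in M. 0 \<le> Z w \<and> Z w \<le> 1"
  by (rule AE_unit_interval_of_prob_less) (simp_all add: prob_Z_less)

lemma integral_rho_indicator_pos:
  assumes [measurable]: "S \<in> sets M" and pos: "0 < measure M S"
  shows "0 < (\<integral>w. \<rho> w * indicator S w \<partial>M)"
proof -
  have int: "integrable M (\<lambda>w. \<rho> w * indicator S w)"
    by (rule integrable_real_mult_indicator[OF _ rho_integrable]) simp
  have nonneg: "AE w in M. 0 \<le> \<rho> w * indicator S w"
    using rho_pos by eventually_elim (auto split: split_indicator)
  have "(\<integral>w. \<rho> w * indicator S w \<partial>M) \<noteq> 0"
  proof
    assume "(\<integral>w. \<rho> w * indicator S w \<partial>M) = 0"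
    then have "AE w in M. \<rho> w * indicator S w = 0"
      using integral_nonneg_eq_0_iff_AE[OF int nonneg] by simp
    then have "AE w in M. w \<notin> S"
      using rho_pos by eventually_elim (auto split: split_indicator)
    then have "emeasure M S = 0"
      using AE_iff_measurable[of S M "\<lambda>w. w \<notin> S"] sets.sets_into_space[OF assms(1)] by auto
    then show False
      using pos by (simp add: emeasure_eq_measure)
  qed
  then show ?thesis
    using integral_nonneg_AE[OF nonneg] by simp
qed

lemma integrable_rho_indicator_comp:
  assumes [measurable]: "f \<in> borel_measurable M" "S \<in> sets borel"
  shows "integrable M (\<lambda>w. \<rho> w * indicator S (f w))"
proof -
  have "integrable M (\<lambda>w. \<rho> w * indicator {w \<in> space M. f w \<in> S} w)"
    by (rule integrable_real_mult_indicator[OF _ rho_integrable]) measurable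
  then show ?thesis
    by (rule Bochner_Integration.integrable_cong[THEN iffD1, rotated -1]) (auto split: split_indicator)
qed

lemma copula_prob_nonneg: "B \<in> sets borel \<Longrightarrow> 0 \<le> copula_prob B u"
  unfolding copula_prob_def by (intro Bochner_Integration.integral_nonneg) (simp add: C12_UA_nonneg split: split_indicator)

lemma nn_integral_C12_UA:
  assumes [measurable]: "B \<in> sets borel"
  shows "(\<integral>\<^sup>+w. ennreal (C12 u (UA w)) * indicator B (A w) \<partial>M) = ennreal (copula_prob B u)"
proof -
  have "(\<integral>\<^sup>+w. ennreal (C12 u (UA w)) * indicator B (A w) \<partial>M)
      = (\<integral>\<^sup>+w. ennreal (C12 u (UA w) * indicator B (A w)) \<partial>M)"
    by (rule nn_integral_cong) (auto split: split_indicator)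
  also have "\<dots> = ennreal (copula_prob B u)"
    unfolding copula_prob_def using C12_UA_nonneg C12_UA_le_1
    by (intro nn_integral_eq_integral_bounded[where c=1]) (auto split: split_indicator)
  finally show ?thesis .
qed

lemma prob_le_A_in_of_copula:
  assumes [measurable]: "X \<in> borel_measurable M" "B \<in> sets borel"
    and joint: "\<And>a. measure M {w \<in> space M. X w \<le> y \<and> A w \<le> a} = C (cdf_rv M X y) (cdf_rv M A a)"
  shows "measure M {w \<in> space M. X w \<le> y \<and> A w \<in> B} = copula_prob B (cdf_rv M X y)"
proof -
  define s where "s = cdf_rv M X y"
  have s: "0 \<le> s" "s \<le> 1"
    unfolding s_def by (rule cdf_rv_nonneg cdf_rv_le_1, simp)+
  have "emeasure M {w \<in> space M. X w \<le> y \<and> A w \<in> B}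
      = (\<integral>\<^sup>+w. indicator {w \<in> space M. X w \<le> y} w * indicator B (A w) \<partial>M)"
    by (rule nn_integral_indicator_A_in[symmetric]) measurable
  also have "\<dots> = (\<integral>\<^sup>+w. ennreal (C12 s (UA w)) * indicator B (A w) \<partial>M)"
  proof (rule nn_integral_comp_eq_of_atMost)
    show "(\<integral>\<^sup>+ w. indicator {w \<in> space M. X w \<le> y} w \<partial>M) < \<infinity>"
      by (simp add: less_top[symmetric])
    show "(\<integral>\<^sup>+ w. ennreal (C12 s (UA w)) \<partial>M) < \<infinity>"
      using nn_integral_C12_UA[of UNIV s] by simp
    fix a
    have "(\<integral>\<^sup>+w. indicator {w \<in> space M. X w \<le> y} w * indicator {..a} (A w) \<partial>M)
        = ennreal (C s (cdf_rv M A a))"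
      using joint[of a] by (subst nn_integral_indicator_A_in) (auto simp: emeasure_eq_measure s_def)
    also have "\<dots> = (\<integral>\<^sup>+w. ennreal (C12 s (UA w)) * indicator {..a} (A w) \<partial>M)"
      using s by (simp add: nn_integral_C12_UA copula_prob_atMost)
    finally show "(\<integral>\<^sup>+w. indicator {w \<in> space M. X w \<le> y} w * indicator {..a} (A w) \<partial>M)
        = (\<integral>\<^sup>+w. ennreal (C12 s (UA w)) * indicator {..a} (A w) \<partial>M)" .
  qed simp_all
  also have "\<dots> = ennreal (copula_prob B s)"
    by (rule nn_integral_C12_UA) fact
  finally show ?thesis
    unfolding s_def using copula_prob_nonneg[of B] by (simp add: emeasure_eq_measure)
qed

end

section \<open>Quantile maximisation under a copula constraint\<close>

locale copula_quantile_problem = copula_transform +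
  fixes \<alpha> x :: real and \<phi> :: "real \<Rightarrow> real"
  assumes alpha: "0 < \<alpha>" "\<alpha> < 1" and x_pos: "0 < x"
    and measurable_phi[measurable]: "\<phi> \<in> borel_measurable borel"
    and phi_cond_exp: "\<forall>B\<in>sets borel.
      (\<integral>w. indicator B (Z w) * \<rho> w \<partial>M) = (\<integral>w. indicator B (Z w) * \<phi> (Z w) \<partial>M)"
begin

definition phi_tail :: "real \<Rightarrow> real"
  where "phi_tail c = (LBINT z:{c..1}. \<phi> z)"

lemma phi_tail_eq:
  assumes "0 \<le> c"
  shows "phi_tail c = (\<integral>w. \<rho> w * indicator {c..} (Z w) \<partial>M)"
proof -
  have "phi_tail c = (\<integral>t. indicator {0..1} t * (indicator {c..1} t * \<phi> t) \<partial>lborel)"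
    unfolding phi_tail_def set_lebesgue_integral_def using assms
    by (intro Bochner_Integration.integral_cong) (auto split: split_indicator)
  also have "\<dots> = (\<integral>w. indicator {c..1} (Z w) * \<phi> (Z w) \<partial>M)"
    by (rule integral_Z[symmetric]) measurable
  also have "\<dots> = (\<integral>w. indicator {c..1} (Z w) * \<rho> w \<partial>M)"
    using phi_cond_exp by simp
  also have "\<dots> = (\<integral>w. \<rho> w * indicator {c..} (Z w) \<partial>M)"
    by (rule integral_cong_AE) (use AE_Z_unit_interval in \<open>auto split: split_indicator\<close>)
  finally show ?thesis .
qed

lemma integral_rho_eq_phi_tail_0: "(\<integral>w. \<rho> w \<partial>M) = phi_tail 0"
  unfolding phi_tail_eq[OF order_refl]
  by (rule integral_cong_AE) (use AE_Z_unit_interval in \<open>auto split: split_indicator\<close>)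

lemma phi_tail_strict_antimono:
  assumes "0 \<le> c" "c < c'" "c' \<le> 1"
  shows "phi_tail c' < phi_tail c"
proof -
  have "measure M {w \<in> space M. c \<le> Z w \<and> Z w < c'}
      = measure M ({w \<in> space M. Z w < c'} - {w \<in> space M. Z w < c})"
    by (rule arg_cong[where f="measure M"]) auto
  also have "\<dots> = c' - c"
    using assms by (subst finite_measure_Diff) (auto simp: prob_Z_less)
  finally have "0 < (\<integral>w. \<rho> w * indicator {w \<in> space M. c \<le> Z w \<and> Z w < c'} w \<partial>M)"
    using assms by (intro integral_rho_indicator_pos) auto
  also have "\<dots> = (\<integral>w. \<rho> w * indicator {c..} (Z w) - \<rho> w * indicator {c'..} (Z w) \<partial>M)"
    using assms by (intro Bochner_Integration.integral_cong) (auto split: split_indicator)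
  also have "\<dots> = phi_tail c - phi_tail c'"
    using assms by (simp add: phi_tail_eq integrable_rho_indicator_comp)
  finally show ?thesis
    by simp
qed

lemma phi_tail_alpha_pos: "0 < phi_tail \<alpha>"
proof -
  have "measure M {w \<in> space M. \<alpha> \<le> Z w} = measure M (space M - {w \<in> space M. Z w < \<alpha>})"
    by (rule arg_cong[where f="measure M"]) auto
  also have "\<dots> = 1 - \<alpha>"
    using alpha by (subst finite_measure_compl) (auto simp: prob_space prob_Z_less)
  finally have "0 < (\<integral>w. \<rho> w * indicator {w \<in> space M. \<alpha> \<le> Z w} w \<partial>M)"
    using alpha by (intro integral_rho_indicator_pos) auto
  also have "\<dots> = phi_tail \<alpha>"
    using alpha by (simp add: phi_tail_eq) (intro Bochner_Integration.integral_cong, auto split: split_indicator)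
  finally show ?thesis .
qed

definition zeta :: "real \<Rightarrow> real"
  where "zeta c = indicator {..\<alpha>} c / phi_tail c"

lemma SUP_zeta: "(SUP c\<in>{0<..<1}. zeta c) = zeta \<alpha>"
proof (rule cSup_eq_maximum)
  show "zeta \<alpha> \<in> zeta ` {0<..<1}"
    using alpha by auto
  fix y
  assume "y \<in> zeta ` {0<..<1}"
  then obtain c where c: "0 < c" "c < 1" "y = zeta c"
    by auto
  show "y \<le> zeta \<alpha>"
  proof (cases "c \<le> \<alpha>")
    case True
    then have "phi_tail \<alpha> \<le> phi_tail c"
      using phi_tail_strict_antimono[of c \<alpha>] c alpha by (cases "c = \<alpha>") auto
    then show ?thesis
      using c True phi_tail_alpha_pos by (simp add: zeta_def frac_le)
  next
    case False
    then show ?thesis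
      using c phi_tail_alpha_pos by (simp add: zeta_def)
  qed
qed

lemma zeta_alpha_gt: "1 / (\<integral>w. \<rho> w \<partial>M) < zeta \<alpha>"
  using phi_tail_strict_antimono[of 0 \<alpha>] alpha phi_tail_alpha_pos
  by (simp add: zeta_def integral_rho_eq_phi_tail_0 frac_less2)

definition kstar :: real
  where "kstar = x / (\<integral>w. \<rho> w * indicator {\<alpha>..} (Z w) \<partial>M)"

definition Xstar :: "'a \<Rightarrow> real"
  where "Xstar w = kstar * indicator {\<alpha>..} (Z w)"

lemma kstar_eq: "kstar = x / phi_tail \<alpha>"
  unfolding kstar_def using alpha by (simp add: phi_tail_eq)

lemma kstar_pos: "0 < kstar"
  unfolding kstar_eq using x_pos phi_tail_alpha_pos by simp

lemma measurable_Xstar[measurable]: "Xstar \<in> borel_measurable M"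
  unfolding Xstar_def by measurable

lemma Xstar_nonneg: "0 \<le> Xstar w"
  unfolding Xstar_def using kstar_pos by (simp split: split_indicator)

lemma Xstar_le_iff: "Xstar w \<le> y \<longleftrightarrow> 0 \<le> y \<and> (y < kstar \<longrightarrow> Z w < \<alpha>)"
  unfolding Xstar_def using kstar_pos by (auto split: split_indicator)

lemma cdf_Xstar: "cdf_rv M Xstar y = (if y < 0 then 0 else if y < kstar then \<alpha> else 1)"
  using alpha by (simp add: cdf_rv_def Xstar_le_iff prob_Z_less prob_space)

lemma joint_cdf_Xstar:
  "measure M {w \<in> space M. Xstar w \<le> y \<and> A w \<le> a} = C (cdf_rv M Xstar y) (cdf_rv M A a)"
  using alpha C_boundary[OF cdf_rv_nonneg[OF A_measurable] cdf_rv_le_1[OF A_measurable]]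
  by (simp add: Xstar_le_iff cdf_Xstar prob_Z_less_A_le) (simp add: cdf_rv_def)

lemma cost_Xstar: "(\<integral>\<^sup>+w. ennreal (\<rho> w * Xstar w) \<partial>M) = ennreal x"
proof -
  have "(\<integral>\<^sup>+w. ennreal (\<rho> w * Xstar w) \<partial>M) = ennreal (\<integral>w. \<rho> w * Xstar w \<partial>M)"
    using rho_pos kstar_pos
    by (intro nn_integral_eq_integral)
      (auto simp: Xstar_def mult.left_commute[of _ kstar] integrable_rho_indicator_comp
        split: split_indicator elim!: eventually_mono)
  also have "(\<integral>w. \<rho> w * Xstar w \<partial>M) = kstar * (\<integral>w. \<rho> w * indicator {\<alpha>..} (Z w) \<partial>M)"
    unfolding Xstar_def by (simp add: mult.left_commute[of _ kstar])
  also have "\<dots> = x"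
    unfolding kstar_def using alpha phi_tail_alpha_pos by (simp add: phi_tail_eq)
  finally show ?thesis .
qed

lemma feasible_Xstar: "feasible M \<rho> A C x Xstar"
  unfolding feasible_def using cost_Xstar joint_cdf_Xstar Xstar_nonneg by auto

lemma quantile_Xstar: "rquantile (cdf_rv M Xstar) \<alpha> = kstar"
proof -
  have "{y. \<alpha> < cdf_rv M Xstar y} = {kstar..}"
    unfolding cdf_Xstar using alpha kstar_pos by (auto simp: not_less)
  then show ?thesis
    unfolding rquantile_def by simp
qed

lemma prob_Z_ge_A_in_le:
  assumes [measurable]: "X \<in> borel_measurable M" "B \<in> sets borel"
    and joint: "\<And>a. measure M {w \<in> space M. X w \<le> y \<and> A w \<le> a} = C (cdf_rv M X y) (cdf_rv M A a)"
    and Fy: "cdf_rv M X y \<le> \<alpha>"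
  shows "measure M {w \<in> space M. \<alpha> \<le> Z w \<and> A w \<in> B} \<le> measure M {w \<in> space M. y < X w \<and> A w \<in> B}"
proof -
  have "measure M {w \<in> space M. \<alpha> \<le> Z w \<and> A w \<in> B}
      = measure M ({w \<in> space M. A w \<in> B} - {w \<in> space M. Z w < \<alpha> \<and> A w \<in> B})"
    by (rule arg_cong[where f="measure M"]) auto
  also have "\<dots> = measure M {w \<in> space M. A w \<in> B} - copula_prob B \<alpha>"
    using alpha by (subst finite_measure_Diff) (auto simp: prob_Z_less_A_in)
  also have "\<dots> \<le> measure M {w \<in> space M. A w \<in> B} - copula_prob B (cdf_rv M X y)"
    using Fy by (simp add: copula_prob_mono)
  also have "\<dots> = measure M ({w \<in> space M. A w \<in> B} - {w \<in> space M. X w \<le> y \<and> A w \<in> B})"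
    using joint by (subst finite_measure_Diff) (auto simp: prob_le_A_in_of_copula)
  also have "\<dots> = measure M {w \<in> space M. y < X w \<and> A w \<in> B}"
    by (rule arg_cong[where f="measure M"]) auto
  finally show ?thesis .
qed

lemma integral_A_Z_ge_le:
  fixes g :: "real \<Rightarrow> real"
  assumes [measurable]: "X \<in> borel_measurable M" "g \<in> borel_measurable borel"
    and joint: "\<And>a. measure M {w \<in> space M. X w \<le> y \<and> A w \<le> a} = C (cdf_rv M X y) (cdf_rv M A a)"
    and Fy: "cdf_rv M X y \<le> \<alpha>" and g: "\<And>a. 0 \<le> g a" "\<And>a. g a \<le> c"
  shows "(\<integral>w. g (A w) * indicator {w \<in> space M. \<alpha> \<le> Z w} w \<partial>M)
    \<le> (\<integral>w. g (A w) * indicator {w \<in> space M. y < X w} w \<partial>M)"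
proof -
  have as_nn_integral: "(\<integral>\<^sup>+w. indicator S w * ennreal (g (A w)) \<partial>M) = ennreal (\<integral>w. g (A w) * indicator S w \<partial>M)"
    if [measurable]: "S \<in> sets M" for S
  proof -
    have "(\<integral>\<^sup>+w. indicator S w * ennreal (g (A w)) \<partial>M) = (\<integral>\<^sup>+w. ennreal (g (A w) * indicator S w) \<partial>M)"
      by (rule nn_integral_cong) (auto split: split_indicator)
    also have "\<dots> = ennreal (\<integral>w. g (A w) * indicator S w \<partial>M)"
      using g order_trans[OF g] by (intro nn_integral_eq_integral_bounded[where c=c]) (auto split: split_indicator)
    finally show ?thesis .
  qed
  have "(\<integral>\<^sup>+w. indicator {w \<in> space M. \<alpha> \<le> Z w} w * ennreal (g (A w)) \<partial>M)
      \<le> (\<integral>\<^sup>+w. indicator {w \<in> space M. y < X w} w * ennreal (g (A w)) \<partial>M)"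
  proof (rule nn_integral_comp_mono_of_emeasure_le[where N=borel and A=A and g="\<lambda>a. ennreal (g a)"])
    fix B :: "real set"
    assume [measurable]: "B \<in> sets borel"
    show "(\<integral>\<^sup>+w. indicator {w \<in> space M. \<alpha> \<le> Z w} w * indicator B (A w) \<partial>M)
        \<le> (\<integral>\<^sup>+w. indicator {w \<in> space M. y < X w} w * indicator B (A w) \<partial>M)"
      using prob_Z_ge_A_in_le[of X B, OF _ _ joint Fy]
      by (simp add: nn_integral_indicator_A_in emeasure_eq_measure)
  qed simp_all
  then show ?thesis
    using g by (simp add: as_nn_integral Bochner_Integration.integral_nonneg)
qed

text \<open>Up to truncation at \<open>n\<close>, the event \<open>{\<alpha> \<le> Z}\<close> is the region \<open>{\<rho> \<le> threshold n A}\<close>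
  below a measurable threshold: the Neyman--Pearson region where the budget buys the most probability.\<close>
definition threshold :: "nat \<Rightarrow> real \<Rightarrow> real"
  where "threshold n a = Sup (insert 0 {q \<in> \<rat>. 0 \<le> q \<and> q \<le> real n \<and>
    (\<forall>u\<in>\<rat>. u < \<alpha> \<longrightarrow> Fcond q a \<le> 1 - C12 u (cdf_rv M A a))})"

lemma bdd_above_threshold_set:
  "bdd_above (insert 0 {q \<in> \<rat>. 0 \<le> q \<and> q \<le> real n \<and> (\<forall>u\<in>\<rat>. u < \<alpha> \<longrightarrow> Fcond q a \<le> 1 - C12 u (cdf_rv M A a))})"
  by (rule bdd_aboveI[where M="real n"]) auto

lemma threshold_nonneg: "0 \<le> threshold n a"
  unfolding threshold_def by (rule cSup_upper[OF _ bdd_above_threshold_set]) simp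

lemma threshold_le: "threshold n a \<le> real n"
  unfolding threshold_def by (rule cSup_least) auto

lemma measurable_threshold[measurable]: "threshold n \<in> borel_measurable borel"
proof (rule borel_measurableI_greater)
  fix c
  define P where "P q a \<longleftrightarrow> (\<forall>u\<in>\<rat>. u < \<alpha> \<longrightarrow> Fcond q a \<le> 1 - C12 u (cdf_rv M A a))" for q a
  have P[measurable]: "{a \<in> space borel. P q a} \<in> sets borel" for q
    unfolding P_def by (intro sets.sets_Collect_countable_All' countable_rat) measurable
  have "{a \<in> space borel. c < threshold n a}
      = {a \<in> space borel. c < 0} \<union> (\<Union>q\<in>\<rat> \<inter> {0..real n} \<inter> {c<..}. {a \<in> space borel. P q a})"
    unfolding threshold_def P_def[symmetric] less_cSup_iff[OF insert_not_empty bdd_above_threshold_set[unfolded P_def[symmetric]]]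
    by auto
  also have "\<dots> \<in> sets borel"
    by (intro sets.Un sets.countable_UN' countable_Int1 countable_rat) (auto intro: P)
  finally show "{a \<in> space borel. c < threshold n a} \<in> sets borel" .
qed

lemma min_rho_le_threshold:
  assumes "\<alpha> \<le> Z w"
  shows "min (\<rho> w) (real n) \<le> threshold n (A w)"
proof (rule ccontr)
  assume "\<not> ?thesis"
  then have "threshold n (A w) < min (\<rho> w) (real n)"
    by (simp only: not_le)
  then obtain q where q: "q \<in> \<rat>" "threshold n (A w) < q" "q < min (\<rho> w) (real n)"
    using Rats_dense_in_real by blast
  have "Fcond q (A w) \<le> 1 - C12 u (cdf_rv M A (A w))" if "u < \<alpha>" for u
  proof -
    have "\<not> 1 - C12 u (UA w) < Urho w"
      using Z_le_of_C12[of u w] that assms by auto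
    moreover have "Fcond q (A w) \<le> Urho w"
      unfolding Urho_def using q by (intro Fcond_mono) simp
    ultimately show ?thesis
      by (simp add: UA_def)
  qed
  then have "q \<le> threshold n (A w)"
    unfolding threshold_def using q threshold_nonneg[of n "A w"]
    by (intro cSup_upper[OF _ bdd_above_threshold_set]) auto
  then show False
    using q by simp
qed

lemma threshold_le_rho:
  assumes "0 < Urho w" "0 < \<rho> w" "Z w < \<alpha>"
  shows "threshold n (A w) \<le> \<rho> w"
proof -
  obtain u where u: "u \<in> \<rat>" "u < \<alpha>" "1 - C12 u (UA w) < Urho w"
    using Z_less_obtain_rat[OF assms(1,3)] by blast
  show ?thesis
    unfolding threshold_def
  proof (rule cSup_least)
    fix q
    assume "q \<in> insert 0 {q \<in> \<rat>. 0 \<le> q \<and> q \<le> real n \<and>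
      (\<forall>u\<in>\<rat>. u < \<alpha> \<longrightarrow> Fcond q (A w) \<le> 1 - C12 u (cdf_rv M A (A w)))}"
    then have "q = 0 \<or> Fcond q (A w) < Fcond (\<rho> w) (A w)"
      using u by (auto simp: Urho_def UA_def)
    then show "q \<le> \<rho> w"
      using assms(2) Fcond_mono[of "\<rho> w" q "A w"] by (cases "\<rho> w \<le> q") auto
  qed simp
qed

lemma integral_rho_Z_ge_le_truncated:
  assumes [measurable]: "X \<in> borel_measurable M"
    and joint: "\<And>a. measure M {w \<in> space M. X w \<le> y \<and> A w \<le> a} = C (cdf_rv M X y) (cdf_rv M A a)"
    and Fy: "cdf_rv M X y \<le> \<alpha>"
  shows "(\<integral>w. \<rho> w * indicator {w \<in> space M. \<alpha> \<le> Z w} w \<partial>M)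
    \<le> (\<integral>w. \<rho> w * indicator {w \<in> space M. y < X w} w \<partial>M) + (\<integral>w. max 0 (\<rho> w - real n) \<partial>M)"
proof -
  define S where "S = {w \<in> space M. \<alpha> \<le> Z w}"
  define T where "T = {w \<in> space M. y < X w}"
  define excess where "excess w = max 0 (\<rho> w - real n)" for w
  have [measurable]: "S \<in> sets M" "T \<in> sets M"
    unfolding S_def T_def by measurable
  have int_rho: "integrable M (\<lambda>w. \<rho> w * indicator U w)" if "U \<in> sets M" for U
    using that by (rule integrable_real_mult_indicator[OF _ rho_integrable])
  have int_threshold: "integrable M (\<lambda>w. threshold n (A w) * indicator U w)" if [measurable]: "U \<in> sets M" for U
    using threshold_nonneg threshold_le
    by (intro integrable_const_bound[where B="real n"]) (auto split: split_indicator)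
  have int_excess: "integrable M excess"
    unfolding excess_def by (intro integrable_max Bochner_Integration.integrable_diff rho_integrable) auto
  \<comment> \<open>Pointwise, \<open>(\<rho> - threshold n A) (1\<^sub>S - 1\<^sub>T) \<le> excess\<close>.\<close>
  have "AE w in M. \<rho> w * indicator S w + threshold n (A w) * indicator T w
      \<le> \<rho> w * indicator T w + excess w + threshold n (A w) * indicator S w"
    using AE_Urho_pos rho_pos
  proof eventually_elim
    case (elim w)
    show ?case
    proof (cases "\<alpha> \<le> Z w")
      case True
      then have "\<rho> w \<le> excess w + threshold n (A w)"
        using min_rho_le_threshold[OF True, of n] by (auto simp: excess_def min_def split: if_splits)
      then show ?thesis
        using True threshold_nonneg[of n "A w"] by (auto simp: S_def T_def excess_def split: split_indicator)
    next
      case False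
      then have "threshold n (A w) \<le> \<rho> w"
        using threshold_le_rho elim by simp
      then show ?thesis
        using False by (auto simp: S_def T_def excess_def split: split_indicator)
    qed
  qed
  then have "(\<integral>w. \<rho> w * indicator S w + threshold n (A w) * indicator T w \<partial>M)
      \<le> (\<integral>w. \<rho> w * indicator T w + excess w + threshold n (A w) * indicator S w \<partial>M)"
    by (intro integral_mono_AE Bochner_Integration.integrable_add int_rho int_threshold int_excess) simp_all
  moreover have "(\<integral>w. threshold n (A w) * indicator S w \<partial>M) \<le> (\<integral>w. threshold n (A w) * indicator T w \<partial>M)"
    unfolding S_def T_def using threshold_nonneg threshold_le
    by (intro integral_A_Z_ge_le[OF _ _ joint Fy]) auto
  ultimately have "(\<integral>w. \<rho> w * indicator S w \<partial>M) \<le> (\<integral>w. \<rho> w * indicator T w \<partial>M) + (\<integral>w. excess w \<partial>M)"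
    by (simp add: int_rho int_threshold int_excess)
  then show ?thesis
    by (simp add: S_def T_def excess_def)
qed

lemma phi_tail_le_integral_rho_X_gt:
  assumes [measurable]: "X \<in> borel_measurable M"
    and joint: "\<And>a. measure M {w \<in> space M. X w \<le> y \<and> A w \<le> a} = C (cdf_rv M X y) (cdf_rv M A a)"
    and Fy: "cdf_rv M X y \<le> \<alpha>"
  shows "phi_tail \<alpha> \<le> (\<integral>w. \<rho> w * indicator {w \<in> space M. y < X w} w \<partial>M)"
proof -
  have "phi_tail \<alpha> = (\<integral>w. \<rho> w * indicator {w \<in> space M. \<alpha> \<le> Z w} w \<partial>M)"
    unfolding phi_tail_eq[OF less_imp_le[OF alpha(1)]]
    by (intro Bochner_Integration.integral_cong) (auto split: split_indicator)
  moreover have "(\<lambda>n. (\<integral>w. \<rho> w * indicator {w \<in> space M. y < X w} w \<partial>M) + (\<integral>w. max 0 (\<rho> w - real n) \<partial>M))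
      \<longlonglongrightarrow> (\<integral>w. \<rho> w * indicator {w \<in> space M. y < X w} w \<partial>M) + 0"
    by (intro tendsto_add tendsto_const integral_max_0_diff_tendsto_0 rho_integrable)
  ultimately show ?thesis
    using integral_rho_Z_ge_le_truncated[OF _ joint Fy]
    by (intro LIMSEQ_le_const[of _ "(\<integral>w. \<rho> w * indicator {w \<in> space M. y < X w} w \<partial>M)"]) auto
qed

lemma le_kstar_of_cdf_le:
  assumes feasible: "feasible M \<rho> A C x X" and Fy: "cdf_rv M X y \<le> \<alpha>" and y: "0 < y"
  shows "y \<le> kstar"
proof -
  have [measurable]: "X \<in> borel_measurable M" and X_nonneg: "AE w in M. 0 \<le> X w"
    and cost: "(\<integral>\<^sup>+w. ennreal (\<rho> w * X w) \<partial>M) \<le> ennreal x"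
    and joint: "\<And>a. measure M {w \<in> space M. X w \<le> y \<and> A w \<le> a} = C (cdf_rv M X y) (cdf_rv M A a)"
    using feasible unfolding feasible_def by auto
  define T where "T = {w \<in> space M. y < X w}"
  have [measurable]: "T \<in> sets M"
    unfolding T_def by measurable
  \<comment> \<open>Markov's inequality for the cost.\<close>
  have "ennreal (y * (\<integral>w. \<rho> w * indicator T w \<partial>M)) = (\<integral>\<^sup>+w. ennreal (y * (\<rho> w * indicator T w)) \<partial>M)"
    using rho_pos y
    by (subst nn_integral_eq_integral)
      (auto intro!: integrable_real_mult_indicator rho_integrable elim!: eventually_mono split: split_indicator)
  also have "\<dots> \<le> (\<integral>\<^sup>+w. ennreal (\<rho> w * X w) \<partial>M)"
    using rho_pos X_nonneg
    by (intro nn_integral_mono_AE) (auto elim!: eventually_mono intro!: ennreal_leI mult_right_mono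
      simp: T_def mult.commute[of y] split: split_indicator)
  also have "\<dots> \<le> ennreal x"
    by (rule cost)
  finally have "y * (\<integral>w. \<rho> w * indicator T w \<partial>M) \<le> x"
    using x_pos by (simp add: ennreal_le_iff)
  moreover have "y * phi_tail \<alpha> \<le> y * (\<integral>w. \<rho> w * indicator T w \<partial>M)"
    using phi_tail_le_integral_rho_X_gt[OF _ joint Fy] y unfolding T_def by (intro mult_left_mono) auto
  ultimately show ?thesis
    using phi_tail_alpha_pos by (simp add: kstar_eq field_simps)
qed

lemma quantile_le_kstar:
  assumes feasible: "feasible M \<rho> A C x X"
  shows "rquantile (cdf_rv M X) \<alpha> \<le> kstar"
proof -
  have [measurable]: "X \<in> borel_measurable M" and X_nonneg: "AE w in M. 0 \<le> X w"
    using feasible unfolding feasible_def by auto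
  define S where "S = {y. \<alpha> < cdf_rv M X y}"
  have "bdd_below S"
  proof (rule bdd_belowI)
    fix y
    assume "y \<in> S"
    moreover have "cdf_rv M X y \<le> measure M {}" if "y < 0"
      unfolding cdf_rv_def using X_nonneg that by (intro finite_measure_mono_AE) (auto elim!: eventually_mono)
    ultimately show "0 \<le> y"
      using alpha by (force simp: S_def)
  qed
  have "Inf S \<le> kstar + e" if "0 < e" for e
  proof -
    have "kstar + e \<in> S"
      using le_kstar_of_cdf_le[OF feasible, of "kstar + e"] kstar_pos that by (force simp: S_def)
    then show ?thesis
      by (rule cInf_lower) fact
  qed
  then show ?thesis
    unfolding rquantile_def S_def[symmetric] by (rule field_le_epsilon)
qed

end

theorem corollary2:
  fixes M :: "'a measure" and \<rho> A :: "'a \<Rightarrow> real"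
    and C C12 Fcond :: "real \<Rightarrow> real \<Rightarrow> real"
    and \<alpha> x \<delta> \<gamma> kstar :: real
    and V :: "('a \<Rightarrow> real) \<Rightarrow> real"
    and Z Xstar :: "'a \<Rightarrow> real" and \<phi> \<zeta> :: "real \<Rightarrow> real"
  assumes M: "prob_space M"
    and rho_meas: "\<rho> \<in> borel_measurable M"
    and rho_pos: "AE w in M. 0 < \<rho> w"
    and rho_int: "integrable M \<rho>"
    and delta: "\<delta> = (\<integral>w. \<rho> w \<partial>M)"
    and A_meas: "A \<in> borel_measurable M"
    and cop: "copula C"
    and C12: "is_copula_cond_cdf C C12"
    and Fcond: "is_cond_cdf M \<rho> A Fcond"
    and Fcond_cont: "\<forall>a. continuous_on UNIV (\<lambda>r. Fcond r a)"
    and A_cont: "continuous_on UNIV (cdf_rv M A)"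
    and alpha: "0 < \<alpha>" "\<alpha> < 1"
    and x: "0 < x"
    and V: "V = (\<lambda>X. rquantile (cdf_rv M X) \<alpha>)"
    and Z: "Z = (\<lambda>w. cond_quantile C12 (1 - Fcond (\<rho> w) (A w)) (cdf_rv M A (A w)))"
    and phi_meas: "\<phi> \<in> borel_measurable borel"
    and phi_int: "integrable M (\<lambda>w. \<phi> (Z w))"
    and phi_condexp: "\<forall>B\<in>sets borel.
          (\<integral>w. indicator B (Z w) * \<rho> w \<partial>M) = (\<integral>w. indicator B (Z w) * \<phi> (Z w) \<partial>M)"
    and zeta: "\<zeta> = (\<lambda>c. indicator {..\<alpha>} c / (LBINT z:{c..1}. \<phi> z))"
    and gamma: "\<gamma> = (SUP c\<in>{0<..<1}. \<zeta> c)"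
    and kstar: "kstar = x / (\<integral>w. \<rho> w * indicator {\<alpha>..} (Z w) \<partial>M)"
    and Xstar: "Xstar = (\<lambda>w. kstar * indicator {\<alpha>..} (Z w))"
  shows "\<gamma> = \<zeta> \<alpha> \<and> \<zeta> \<alpha> > 1 / \<delta> \<and>
         feasible M \<rho> A C x Xstar \<and>
         (\<forall>X. feasible M \<rho> A C x X \<longrightarrow> V X \<le> V Xstar)"
proof -
  interpret T: copula_transform M \<rho> A C C12 Fcond
    by (intro copula_transform.intro copula_transform_axioms.intro M)
      (use rho_meas rho_pos rho_int A_meas cop C12 Fcond Fcond_cont A_cont in auto)
  have Z_eq: "Z = T.Z"
    unfolding Z T.Z_def T.Urho_def T.UA_def ..
  interpret P: copula_quantile_problem M \<rho> A C C12 Fcond \<alpha> x \<phi>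
    by (intro copula_quantile_problem.intro copula_quantile_problem_axioms.intro T.copula_transform_axioms)
      (use alpha x phi_meas phi_condexp Z_eq in auto)
  have zeta_eq: "\<zeta> = P.zeta"
    unfolding zeta P.zeta_def P.phi_tail_def ..
  have Xstar_eq: "Xstar = P.Xstar"
    unfolding Xstar kstar P.Xstar_def P.kstar_def Z_eq ..
  show ?thesis
    unfolding gamma delta V zeta_eq Xstar_eq
    using P.SUP_zeta P.zeta_alpha_gt P.feasible_Xstar P.quantile_le_kstar P.quantile_Xstar by auto
qed

end
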